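(* Let $A=\mathbb C\langle u^{\pm1},v^{\pm1}\rangle$ and let $\{\cdot,\cdot\}_K:A\times A\to A$ be the bracket $\{a,b\}_K=\mu(\llbracket a\otimes b\rrbracket_K)$ described in the context. Then: (1) $\{\cdot,\cdot\}_K$ is bilinear, hence extends to a linear map $A\otimes A\to A$; (2a) for all $a,b,c\in A$: $\{a,bc\}_K=\{a,b\}_K\,c+b\,\{a,c\}_K$; (2b) for all $a,b,c\in A$: $\{ab,c\}_K=\{ba,c\}_K$; (3) for all $a,b\in A$: $\{a,b\}_K\equiv-\{b,a\}_K \bmod [A,A]$; (4) for all $H_1,H_2,x\in A$: $\{H_1,\{H_2,x\}_K\}_K-\{H_2,\{H_1,x\}_K\}_K=\{\{H_1,H_2\}_K,x\}_K$.
   Context: $A=\mathbb C\langle u^{\pm1},v^{\pm1}\rangle$ is the group algebra over $\mathbb C$ of the free group on two generators $u,v$. $[A,A]$ denotes the linear span of all $ab-ba$, $a,b\in A$. $\mu:A\otimes A\to A$ is multiplication, $\mu(a\otimes b)=ab$. $A\otimes A$ is an algebra with componentwise multiplication $(x\otimes y)(x'\otimes y')=xx'\otimes yy'$. The double bracket $\llbracket\cdot\rrbracket_K:A\otimes A\to A\otimes A$ is the linear map determined by the values on generators $\llbracket u\otimes v\rrbracket_K=-vu\otimes1$, $\llbracket v\otimes u\rrbracket_K=uv\otimes 1$, $\llbracket u\otimes u\rrbracket_K=\llbracket v\otimes v\rrbracket_K=0$, together with the Leibniz rules $\llbracket a\otimes bc\rrbracket_K=\llbracket a\otimes b\rrbracket_K(1\otimes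 c)+(b\otimes1)\llbracket a\otimes c\rrbracket_K$ and $\llbracket ab\otimes c\rrbracket_K=\llbracket a\otimes c\rrbracket_K(b\otimes1)+(1\otimes a)\llbracket b\otimes c\rrbracket_K$. Consequently on inverses: $\llbracket u^{-1}\otimes v^{-1}\rrbracket_K=-1\otimes u^{-1}v^{-1}$, $\llbracket v^{-1}\otimes u^{-1}\rrbracket_K=1\otimes v^{-1}u^{-1}$, $\llbracket u^{-1}\otimes v\rrbracket_K=v\otimes u^{-1}$, $\llbracket v\otimes u^{-1}\rrbracket_K=-v\otimes u^{-1}$, $\llbracket u\otimes v^{-1}\rrbracket_K=u\otimes v^{-1}$, $\llbracket v^{-1}\otimes u\rrbracket_K=-u\otimes v^{-1}$, and brackets of a letter with itself or its inverse vanish. Explicitly, for monomials $a=a_1\cdots a_k$, $b=b_1\cdots b_m$ with letters in $\{u^{\pm1},v^{\pm1}\}$, writing $\llbracket a_i\otimes b_j\rrbracket_K=x_{ij}\otimes y_{ij}$, one has $\llbracket a\otimes b\rrbracket_K=\sum_{i,j}(b_1\cdots b_{j-1}x_{ij}a_{i+1}\cdots a_k)\otimes(a_1\cdots a_{i-1}y_{ij}b_{j+1}\cdots b_m)$, extended bilinearly. The bracket is $\{a,b\}_K=\mu(\llbracket a\otimes b\rrbracket_K)$. *)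

theory Defs
  imports Complex_Main "HOL-Library.Poly_Mapping"
begin

text \<open>A letter is L g e: g = False means generator u, g = True means v;
  e = True means the inverse. So u = L False False, u^-1 = L False True,
  v = L True False, v^-1 = L True True.\<close>

datatype letter = L bool bool

fun inv_l :: "letter \<Rightarrow> letter" where
  "inv_l (L g e) = L g (\<not> e)"

fun reduced :: "letter list \<Rightarrow> bool" where
  "reduced [] = True"
| "reduced [x] = True"
| "reduced (x # y # ys) = (y \<noteq> inv_l x \<and> reduced (y # ys))"

fun cr :: "letter \<Rightarrow> letter list \<Rightarrow> letter list" where
  "cr x [] = [x]"
| "cr x (y # ys) = (if y = inv_l x then ys else x # y # ys)"

lemma inv_l_neq[simp]: "inv_l x \<noteq> x" "x \<noteq> inv_l x"
  by (cases x, auto)+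

lemma inv_l_inv_l[simp]: "inv_l (inv_l x) = x"
  by (cases x) auto

lemma reduced_tl: "reduced (y # ys) \<Longrightarrow> reduced ys"
  by (cases ys) auto

lemma reduced_cr: "reduced w \<Longrightarrow> reduced (cr x w)"
  by (cases w) (auto dest: reduced_tl)

lemma reduced_foldr_cr: "reduced w \<Longrightarrow> reduced (foldr cr a w)"
  by (induction a) (auto intro: reduced_cr)

lemma cr_cancel: "reduced w \<Longrightarrow> cr x (cr (inv_l x) w) = w"
proof (cases w)
  case (Cons y ys)
  assume r: "reduced w"
  show ?thesis
  proof (cases "y = x")
    case True
    then show ?thesis using Cons r by (cases ys) auto
  next
    case False
    then show ?thesis using Cons r by (cases ys) auto
  qed
qed simp

lemma foldr_cr_cr:
  assumes "reduced r" "reduced c"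
  shows "foldr cr (cr x r) c = cr x (foldr cr r c)"
proof (cases r)
  case Nil then show ?thesis by simp
next
  case (Cons y r')
  show ?thesis
  proof (cases "y = inv_l x")
    case True
    have "reduced (foldr cr r' c)" using assms(2) by (rule reduced_foldr_cr)
    then show ?thesis using Cons True cr_cancel[of "foldr cr r' c" x] by simp
  next
    case False then show ?thesis using Cons by simp
  qed
qed

lemma foldr_cr_assoc:
  assumes "reduced b" "reduced c"
  shows "foldr cr (foldr cr a b) c = foldr cr a (foldr cr b c)"
  using assms
proof (induction a)
  case (Cons x a)
  have "reduced (foldr cr a b)" using Cons.prems(1) by (rule reduced_foldr_cr)
  then show ?case using Cons foldr_cr_cr[of "foldr cr a b" c x] by simp
qed simp

lemma foldr_cr_Nil: "reduced w \<Longrightarrow> foldr cr w [] = w"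
proof (induction w)
  case (Cons x w)
  have r: "reduced w" using Cons.prems by (rule reduced_tl)
  then show ?case using Cons by (cases w) auto
qed simp

typedef fg = "{w. reduced w}" morphisms word Abs_fg
  by (rule exI[of _ "[]"]) simp

text \<open>The (non-commutative) group law of the free group is written additively,
  so that the group algebra is the convolution ring of finitely supported functions fg to complex.\<close>
instantiation fg :: monoid_add
begin
definition zero_fg :: fg where "zero_fg = Abs_fg []"
definition plus_fg :: "fg \<Rightarrow> fg \<Rightarrow> fg" where
  "plus_fg a b = Abs_fg (foldr cr (word a) (word b))"
instance
proof
  fix a b c :: fg
  have ra: "reduced (word a)" "reduced (word b)" "reduced (word c)"
    using word by auto
  show "a + b + c = a + (b + c)"
    unfolding plus_fg_def
    using ra by (simp add: Abs_fg_inverse reduced_foldr_cr foldr_cr_assoc)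
  show "0 + a = a" unfolding plus_fg_def zero_fg_def
    by (simp add: Abs_fg_inverse word_inverse)
  show "a + 0 = a" unfolding plus_fg_def zero_fg_def
    using ra by (simp add: Abs_fg_inverse word_inverse foldr_cr_Nil)
qed
end

type_synonym A = "fg \<Rightarrow>\<^sub>0 complex"
type_synonym AA = "(fg \<times> fg) \<Rightarrow>\<^sub>0 complex"   \<comment> \<open>A \<otimes> A, basis g \<otimes> h\<close>

definition cs :: "complex \<Rightarrow> ('k \<Rightarrow>\<^sub>0 complex) \<Rightarrow> ('k \<Rightarrow>\<^sub>0 complex)" where
  "cs c p = Poly_Mapping.map (\<lambda>z. c * z) p"

definition tens :: "A \<Rightarrow> A \<Rightarrow> AA" where
  "tens p q = (\<Sum>g\<in>Poly_Mapping.keys p. \<Sum>h\<in>Poly_Mapping.keys q.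
       Poly_Mapping.single (g, h) (Poly_Mapping.lookup p g * Poly_Mapping.lookup q h))"

definition mu :: "AA \<Rightarrow> A" where
  "mu t = (\<Sum>gh\<in>Poly_Mapping.keys t. Poly_Mapping.single (fst gh + snd gh) (Poly_Mapping.lookup t gh))"

definition gen_el :: "letter \<Rightarrow> A" where
  "gen_el x = Poly_Mapping.single (Abs_fg [x]) 1"

definition mono :: "letter list \<Rightarrow> A" where
  "mono w = prod_list (map gen_el w)"

text \<open>Values of the double bracket on pairs of letters: Some (c, x, y) means
  c \<cdot> x \<otimes> y (x, y words), None means 0.\<close>
fun lbr :: "letter \<Rightarrow> letter \<Rightarrow> (complex \<times> letter list \<times> letter list) option" where
  "lbr (L False False) (L True False) = Some (-1, [L True False, L False False], [])"
| "lbr (L True False) (L False False) = Some (1, [L False False, L True False], [])"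
| "lbr (L False True) (L True True) = Some (-1, [], [L False True, L True True])"
| "lbr (L True True) (L False True) = Some (1, [], [L True True, L False True])"
| "lbr (L False True) (L True False) = Some (1, [L True False], [L False True])"
| "lbr (L True False) (L False True) = Some (-1, [L True False], [L False True])"
| "lbr (L False False) (L True True) = Some (1, [L False False], [L True True])"
| "lbr (L True True) (L False False) = Some (-1, [L False False], [L True True])"
| "lbr _ _ = None"

definition dbr_word :: "letter list \<Rightarrow> letter list \<Rightarrow> AA" where
  "dbr_word a b = (\<Sum>i<length a. \<Sum>j<length b.
     (case lbr (a ! i) (b ! j) of
        None \<Rightarrow> 0
      | Some (c, x, y) \<Rightarrow>
          cs c (tens (mono (take j b) * mono x * mono (drop (Suc i) a))
                     (mono (take i a) * mono y * mono (drop (Suc j) b)))))"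

text \<open>bilinear extension to A \<otimes> A (monomials of A are the group elements g,
  written as reduced words word g)\<close>
definition dbrK :: "A \<Rightarrow> A \<Rightarrow> AA" where
  "dbrK a b = (\<Sum>g\<in>Poly_Mapping.keys a. \<Sum>h\<in>Poly_Mapping.keys b.
      cs (Poly_Mapping.lookup a g * Poly_Mapping.lookup b h) (dbr_word (word g) (word h)))"

definition brK :: "A \<Rightarrow> A \<Rightarrow> A" where
  "brK a b = mu (dbrK a b)"

definition commA :: "A set" where
  "commA = module.span cs {x * y - y * x | x y. True}"

end

theory Submission
  imports Defs
begin

text \<open>
  Write \<open>wbr p q\<close> for the bracket of the monomials of two words \<open>p\<close>, \<open>q\<close>. Its double sum is a
  Leibniz extension in each variable: in \<open>q\<close> an ordinary derivation determined by its values on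
  letters, in \<open>p\<close> a cyclic one. Both extensions respect free cancellation, so \<open>brK\<close> is the
  bilinear extension of \<open>wbr\<close>, and the two Leibniz rules give (2a) and (2b).

  For (3), exchanging the tensor factors in each term of \<open>wbr q p\<close> changes it by commutators only,
  and the exchanged sum plus \<open>wbr p q\<close> is the commutator of \<open>q\<close> with a cyclic sum over the
  rotations of \<open>p\<close>.

  For (4), the Jacobiator is a derivation in \<open>x\<close>, so it suffices to take \<open>x\<close> a generator and
  \<open>H1\<close>, \<open>H2\<close> monomials. The automorphism exchanging \<open>u\<close> and \<open>v\<close> changes the sign of the
  bracket, which reduces \<open>x = v\<close> to \<open>x = u\<close>. As \<open>{H, u} = u \<Phi>(H)\<close> for the cyclic derivation
  \<open>\<Phi>\<close> in the letters \<open>v\<close>, \<open>v\<inverse>\<close>, the case \<open>x = u\<close> is an identity between \<open>\<Phi>\<close> and the bracket.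
  With a free middle slot \<open>z\<close> in place of the unit, this identity becomes additive along the word
  \<open>q\<close> of \<open>H2\<close> (with \<open>z\<close> shifted), so it suffices to show that on the letters \<open>u\<close>, \<open>v\<close> it equals
  \<open>E(z q) - E(q z)\<close> for an explicit cyclic sum \<open>E\<close> over the rotations of the word of \<open>H1\<close>;
  this is an induction on words with a finite check on pairs of letters.
\<close>

lemma lookup_cs: "Poly_Mapping.lookup (cs c p) k = c * Poly_Mapping.lookup p k"
  unfolding cs_def by (simp add: Poly_Mapping.map.rep_eq when_def)

lemma keys_cs: "Poly_Mapping.keys (cs c p) \<subseteq> Poly_Mapping.keys p"
  by (auto simp: in_keys_iff lookup_cs)

lemma cs_eq_single_zero_mult: "cs c (p::A) = Poly_Mapping.single 0 c * p"
proof -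
  have "(\<lambda>z. c * z) = (*) c" by (rule ext) simp
  then show ?thesis unfolding cs_def by (simp add: mult_map_scale_conv_mult)
qed

lemma cs_0[simp]: "cs 0 p = 0" by (rule poly_mapping_eqI) (simp add: lookup_cs)
lemma cs_1[simp]: "cs 1 p = p" by (rule poly_mapping_eqI) (simp add: lookup_cs)
lemma cs_zero[simp]: "cs c 0 = 0" by (rule poly_mapping_eqI) (simp add: lookup_cs)
lemma cs_add_right: "cs c (p + q) = cs c p + cs c q"
  by (rule poly_mapping_eqI) (simp add: lookup_cs lookup_add algebra_simps)
lemma cs_add_left: "cs (c + d) p = cs c p + cs d p"
  by (rule poly_mapping_eqI) (simp add: lookup_cs lookup_add algebra_simps)
lemma cs_cs: "cs c (cs d p) = cs (c * d) p"
  by (rule poly_mapping_eqI) (simp add: lookup_cs)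
lemma cs_minus: "cs c (- p) = - cs c p"
  by (rule poly_mapping_eqI) (simp add: lookup_cs)
lemma cs_diff: "cs c (p - q) = cs c p - cs c q"
  by (rule poly_mapping_eqI) (simp add: lookup_cs lookup_minus algebra_simps)
lemma cs_minus_one: "cs (-1) p = - p"
  by (rule poly_mapping_eqI) (simp add: lookup_cs)
lemma cs_sum: "cs c (sum f S) = sum (\<lambda>x. cs c (f x)) S"
  by (induction S rule: infinite_finite_induct) (auto simp: cs_add_right)

lemma update_eq_add_single:
  assumes "a \<notin> Poly_Mapping.keys f"
  shows "Poly_Mapping.update a b f = f + Poly_Mapping.single a b"
  using assms by (intro poly_mapping_eqI) (auto simp: lookup_update lookup_add lookup_single in_keys_iff when_def)

lemma poly_mapping_add_single_induct [case_names zero add]: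
  assumes "P 0" "\<And>f a b. P f \<Longrightarrow> P (f + Poly_Mapping.single a b)"
  shows "P x"
proof (induction x rule: update_induct)
  case const then show ?case using assms(1) .
next
  case (update f a b) then show ?case using assms(2) update_eq_add_single by metis
qed

lemma single_zero_mult_commute: "Poly_Mapping.single 0 c * (p::A) = p * Poly_Mapping.single 0 c"
proof (induction p rule: poly_mapping_add_single_induct)
  case zero then show ?case by simp
next
  case (add f a b)
  then show ?case by (simp add: distrib_left distrib_right mult_single mult.commute)
qed

lemma cs_mult_left: "cs c (p::A) * q = cs c (p * q)"
  by (simp add: cs_eq_single_zero_mult mult.assoc)
lemma cs_mult_right: "(p::A) * cs c q = cs c (p * q)"
  by (simp add: cs_eq_single_zero_mult mult.assoc[symmetric] single_zero_mult_commute)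
     (simp add: mult.assoc single_zero_mult_commute)

lemma word_single: "word (Abs_fg [x]) = [x]"
  by (simp add: Abs_fg_inverse)

lemma reduced_word: "reduced (word g)" using word by auto

definition reduce :: "letter list \<Rightarrow> letter list" where "reduce w = foldr cr w []"

lemma reduced_reduce: "reduced (reduce w)"
  unfolding reduce_def by (rule reduced_foldr_cr) simp

lemma reduce_Cons: "reduce (x # w) = cr x (reduce w)" by (simp add: reduce_def)
lemma reduce_Nil[simp]: "reduce [] = []" by (simp add: reduce_def)

lemma reduce_reduced: "reduced w \<Longrightarrow> reduce w = w"
  by (simp add: reduce_def foldr_cr_Nil)

lemma word_Abs_reduce: "word (Abs_fg (reduce w)) = reduce w"
  by (simp add: Abs_fg_inverse reduced_reduce)

lemma plus_fg_single: "reduced r \<Longrightarrow> Abs_fg [x] + Abs_fg r = Abs_fg (cr x r)"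
  by (simp add: plus_fg_def word_single Abs_fg_inverse)

lemma mono_Nil[simp]: "mono [] = 1" by (simp add: mono_def)
lemma mono_Cons: "mono (x # w) = gen_el x * mono w" by (simp add: mono_def)
lemma mono_append: "mono (a @ b) = mono a * mono b" by (simp add: mono_def)
lemma mono_single[simp]: "mono [x] = gen_el x" by (simp add: mono_def)
lemma mono_snoc: "mono (w @ [x]) = mono w * gen_el x" by (simp add: mono_append)

lemma mono_reduce: "mono w = Poly_Mapping.single (Abs_fg (reduce w)) 1"
proof (induction w)
  case Nil then show ?case by (simp add: zero_fg_def[symmetric])
next
  case (Cons x w)
  have "mono (x # w) = Poly_Mapping.single (Abs_fg [x] + Abs_fg (reduce w)) 1"
    by (simp add: mono_Cons Cons gen_el_def mult_single)
  also have "\<dots> = Poly_Mapping.single (Abs_fg (reduce (x # w))) 1"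
    by (simp add: plus_fg_single reduced_reduce reduce_Cons)
  finally show ?case .
qed

lemma mono_word: "mono (word g) = Poly_Mapping.single g 1"
  by (simp add: mono_reduce reduce_reduced reduced_word word_inverse)

lemma mono_eq_reduce: "mono (reduce w) = mono w"
  by (simp add: mono_reduce reduce_reduced reduced_reduce)

lemma gen_el_mult_inv: "gen_el x * gen_el (inv_l x) = 1"
proof -
  have "gen_el x * gen_el (inv_l x) = mono [x, inv_l x]" by (simp add: mono_def)
  also have "\<dots> = 1" by (simp add: mono_reduce reduce_def zero_fg_def[symmetric])
  finally show ?thesis .
qed

lemma gen_el_mult_inv_left: "gen_el x * (gen_el (inv_l x) * y) = y"
  by (simp add: mult.assoc[symmetric] gen_el_mult_inv)

abbreviation lu where "lu \<equiv> L False False"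
abbreviation lU where "lU \<equiv> L False True"
abbreviation lv where "lv \<equiv> L True False"
abbreviation lV where "lV \<equiv> L True True"

lemma gen_el_cancel[simp]:
  "gen_el (L g False) * gen_el (L g True) = 1"
  "gen_el (L g True) * gen_el (L g False) = 1"
  "gen_el (L g False) * (gen_el (L g True) * z) = z"
  "gen_el (L g True) * (gen_el (L g False) * z) = z"
  using gen_el_mult_inv[of "L g False"] gen_el_mult_inv[of "L g True"]
    gen_el_mult_inv_left[of "L g False"] gen_el_mult_inv_left[of "L g True"]
  by auto

lemma letter_cases [case_names u U v V]:
  obtains "x = lu" | "x = lU" | "x = lv" | "x = lV"
  by (cases x) auto

definition lin_ext :: "(fg \<Rightarrow> A) \<Rightarrow> A \<Rightarrow> A" where
  "lin_ext F a = (\<Sum>g\<in>Poly_Mapping.keys a. cs (Poly_Mapping.lookup a g) (F g))"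

lemma lin_ext_superset:
  assumes "finite S" "Poly_Mapping.keys a \<subseteq> S"
  shows "lin_ext F a = (\<Sum>g\<in>S. cs (Poly_Mapping.lookup a g) (F g))"
  unfolding lin_ext_def
  by (rule sum.mono_neutral_left) (use assms in \<open>auto simp: in_keys_iff\<close>)

lemma lin_ext_add: "lin_ext F (a + b) = lin_ext F a + lin_ext F b"
proof -
  let ?S = "Poly_Mapping.keys a \<union> Poly_Mapping.keys b"
  have "lin_ext F (a + b) = (\<Sum>g\<in>?S. cs (Poly_Mapping.lookup (a+b) g) (F g))"
    by (rule lin_ext_superset) (auto simp: keys_add)
  also have "\<dots> = (\<Sum>g\<in>?S. cs (Poly_Mapping.lookup a g) (F g)) + (\<Sum>g\<in>?S. cs (Poly_Mapping.lookup b g) (F g))"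
    by (simp add: lookup_add cs_add_left sum.distrib)
  also have "\<dots> = lin_ext F a + lin_ext F b"
    by (subst (1 2) lin_ext_superset[of ?S]) auto
  finally show ?thesis .
qed

lemma lin_ext_zero[simp]: "lin_ext F 0 = 0" by (simp add: lin_ext_def)

lemma lin_ext_cs: "lin_ext F (cs c a) = cs c (lin_ext F a)"
proof -
  have "lin_ext F (cs c a) = (\<Sum>g\<in>Poly_Mapping.keys a. cs (Poly_Mapping.lookup (cs c a) g) (F g))"
    by (rule lin_ext_superset) (auto simp: keys_cs)
  also have "\<dots> = cs c (lin_ext F a)"
    by (simp add: lin_ext_def lookup_cs cs_cs cs_sum)
  finally show ?thesis .
qed

lemma lin_ext_single: "lin_ext F (Poly_Mapping.single g c) = cs c (F g)"
proof -
  have "lin_ext F (Poly_Mapping.single g c) = (\<Sum>h\<in>{g}. cs (Poly_Mapping.lookup (Poly_Mapping.single g c) h) (F h))"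
    by (rule lin_ext_superset) auto
  then show ?thesis by simp
qed

lemma lin_ext_mono: "lin_ext F (mono w) = F (Abs_fg (reduce w))"
  by (simp add: mono_reduce lin_ext_single)

lemma lin_ext_fun_add: "lin_ext (\<lambda>g. F g + G g) a = lin_ext F a + lin_ext G a"
  by (simp add: lin_ext_def cs_add_right sum.distrib)
lemma lin_ext_fun_cs: "lin_ext (\<lambda>g. cs c (F g)) a = cs c (lin_ext F a)"
  by (simp add: lin_ext_def cs_sum cs_cs mult.commute)
lemma lin_ext_fun_zero[simp]: "lin_ext (\<lambda>g. 0) a = 0"
  by (simp add: lin_ext_def)

lemma single_eq_cs_mono: "Poly_Mapping.single g c = cs c (mono (word g))"
  by (simp add: mono_word cs_eq_single_zero_mult mult_single)

lemma A_mono_induct [case_names zero add]: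
  assumes "P 0" "\<And>f c w. P f \<Longrightarrow> P (f + cs c (mono w))"
  shows "P x"
  by (induction x rule: poly_mapping_add_single_induct) (use assms in \<open>auto simp: single_eq_cs_mono\<close>)

lemma A_linear_eqI:
  assumes "\<And>x y. F (x + y) = F x + F y" "\<And>c x. F (cs c x) = cs c (F x)"
    "\<And>x y. G (x + y) = G x + G y" "\<And>c x. G (cs c x) = cs c (G x)"
    "\<And>w. F (mono w) = G (mono w)"
  shows "F a = G a"
proof (induction a rule: A_mono_induct)
  case zero
  have "F 0 = 0" using assms(2)[of 0 0] by simp
  moreover have "G 0 = 0" using assms(4)[of 0 0] by simp
  ultimately show ?case by simp
next
  case (add f c w) then show ?case using assms by simp
qed

definition lin_word :: "(letter list \<Rightarrow> A) \<Rightarrow> A \<Rightarrow> A" where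
  "lin_word f y = lin_ext (\<lambda>g. f (word g)) y"

lemma lin_word_mono: "(\<And>w. f (reduce w) = f w) \<Longrightarrow> lin_word f (mono w) = f w"
  by (simp add: lin_word_def lin_ext_mono word_Abs_reduce)

lemma lin_word_add: "lin_word f (a + b) = lin_word f a + lin_word f b" by (simp add: lin_word_def lin_ext_add)
lemma lin_word_cs: "lin_word f (cs c a) = cs c (lin_word f a)" by (simp add: lin_word_def lin_ext_cs)
lemma lin_word_zero[simp]: "lin_word f 0 = 0" by (simp add: lin_word_def)
lemma lin_word_fun_add: "lin_word (\<lambda>w. f w + g w) a = lin_word f a + lin_word g a"
  by (simp add: lin_word_def lin_ext_fun_add)
lemma lin_word_fun_cs: "lin_word (\<lambda>w. cs c (f w)) a = cs c (lin_word f a)"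
  by (simp add: lin_word_def lin_ext_fun_cs)
lemma lin_word_fun_zero[simp]: "lin_word (\<lambda>w. 0) a = 0"
  by (simp add: lin_word_def)

lemma poly_mapping_sum_single:
  "(p :: 'k \<Rightarrow>\<^sub>0 complex) = (\<Sum>g\<in>Poly_Mapping.keys p. Poly_Mapping.single g (Poly_Mapping.lookup p g))"
  by (rule poly_mapping_eqI) (simp add: lookup_sum lookup_single when_def in_keys_iff)

lemma mu_superset:
  assumes "finite S" "Poly_Mapping.keys t \<subseteq> S"
  shows "mu t = (\<Sum>gh\<in>S. Poly_Mapping.single (fst gh + snd gh) (Poly_Mapping.lookup t gh))"
  unfolding mu_def by (rule sum.mono_neutral_left) (use assms in \<open>auto simp: in_keys_iff\<close>)

lemma mu_add: "mu (s + t) = mu s + mu t"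
proof -
  let ?S = "Poly_Mapping.keys s \<union> Poly_Mapping.keys t"
  have "mu (s + t) = (\<Sum>gh\<in>?S. Poly_Mapping.single (fst gh + snd gh) (Poly_Mapping.lookup (s+t) gh))"
    by (rule mu_superset) (auto simp: keys_add)
  also have "\<dots> = (\<Sum>gh\<in>?S. Poly_Mapping.single (fst gh + snd gh) (Poly_Mapping.lookup s gh))
     + (\<Sum>gh\<in>?S. Poly_Mapping.single (fst gh + snd gh) (Poly_Mapping.lookup t gh))"
    by (simp add: lookup_add single_add sum.distrib)
  also have "\<dots> = mu s + mu t" by (subst (1 2) mu_superset[of ?S]) auto
  finally show ?thesis .
qed

lemma mu_zero[simp]: "mu 0 = 0" by (simp add: mu_def)

lemma mu_sum: "mu (sum f S) = (\<Sum>x\<in>S. mu (f x))"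
  by (induction S rule: infinite_finite_induct) (auto simp: mu_add)

lemma mu_single: "mu (Poly_Mapping.single (g, h) c) = Poly_Mapping.single (g + h) c"
proof -
  have "mu (Poly_Mapping.single (g, h) c)
      = (\<Sum>gh\<in>{(g,h)}. Poly_Mapping.single (fst gh + snd gh) (Poly_Mapping.lookup (Poly_Mapping.single (g, h) c) gh))"
    by (rule mu_superset) auto
  then show ?thesis by simp
qed

lemma mu_cs: "mu (cs c t) = cs c (mu t)"
proof -
  have "mu (cs c t)
      = (\<Sum>gh\<in>Poly_Mapping.keys t. Poly_Mapping.single (fst gh + snd gh) (Poly_Mapping.lookup (cs c t) gh))"
    by (rule mu_superset) (auto simp: keys_cs)
  also have "\<dots> = cs c (mu t)"
    by (simp add: mu_def cs_sum lookup_cs cs_eq_single_zero_mult mult_single sum_distrib_left)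
  finally show ?thesis .
qed

lemma mu_tens: "mu (tens p q) = p * q"
proof -
  have "mu (tens p q) = (\<Sum>g\<in>Poly_Mapping.keys p. \<Sum>h\<in>Poly_Mapping.keys q.
      Poly_Mapping.single g (Poly_Mapping.lookup p g) * Poly_Mapping.single h (Poly_Mapping.lookup q h))"
    by (simp add: tens_def mu_sum mu_single mult_single)
  also have "\<dots> = (\<Sum>g\<in>Poly_Mapping.keys p. Poly_Mapping.single g (Poly_Mapping.lookup p g)) *
                  (\<Sum>h\<in>Poly_Mapping.keys q. Poly_Mapping.single h (Poly_Mapping.lookup q h))"
    by (simp add: sum_distrib_left sum_distrib_right) (rule sum.swap)
  also have "\<dots> = p * q" by (simp flip: poly_mapping_sum_single)
  finally show ?thesis .
qed


section \<open>Leibniz extensions along words\<close>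

definition der_word :: "(letter \<Rightarrow> A) \<Rightarrow> letter list \<Rightarrow> A" where
  "der_word \<delta> w = (\<Sum>k<length w. mono (take k w) * \<delta> (w ! k) * mono (drop (Suc k) w))"

lemma der_word_Nil[simp]: "der_word \<delta> [] = 0" by (simp add: der_word_def)

lemma der_word_Cons: "der_word \<delta> (x # w) = \<delta> x * mono w + gen_el x * der_word \<delta> w"
  unfolding der_word_def
  by (simp add: sum.lessThan_Suc_shift mono_Cons sum_distrib_left mult.assoc del: sum.lessThan_Suc)

lemma der_word_append: "der_word \<delta> (a @ b) = der_word \<delta> a * mono b + mono a * der_word \<delta> b"
  by (induction a) (simp_all add: der_word_Cons mono_Cons mono_append algebra_simps)

lemma der_word_single[simp]: "der_word \<delta> [x] = \<delta> x"
  by (simp add: der_word_Cons)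

lemma der_word_add: "der_word (\<lambda>y. \<delta>1 y + \<delta>2 y) w = der_word \<delta>1 w + der_word \<delta>2 w"
  by (simp add: der_word_def algebra_simps sum.distrib)

lemma der_word_zero: "der_word (\<lambda>y. 0) w = 0"
  by (simp add: der_word_def)

lemma der_word_cong: "(\<And>y. \<delta>1 y = \<delta>2 y) \<Longrightarrow> der_word \<delta>1 w = der_word \<delta>2 w"
  by (simp add: der_word_def)

lemma der_word_cr:
  assumes "\<And>x. \<delta> x * gen_el (inv_l x) + gen_el x * \<delta> (inv_l x) = 0"
  shows "der_word \<delta> (cr x r) = der_word \<delta> (x # r)"
proof (cases r)
  case (Cons y r')
  show ?thesis
  proof (cases "y = inv_l x")
    case True
    have "der_word \<delta> (x # r) = (\<delta> x * gen_el (inv_l x) + gen_el x * \<delta> (inv_l x)) * mono r' + der_word \<delta> r'"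
      using Cons True by (simp add: der_word_Cons mono_Cons algebra_simps gen_el_mult_inv_left)
    then show ?thesis using Cons True assms by simp
  qed (use Cons in auto)
qed simp

lemma der_word_reduce:
  assumes "\<And>x. \<delta> x * gen_el (inv_l x) + gen_el x * \<delta> (inv_l x) = 0"
  shows "der_word \<delta> (reduce w) = der_word \<delta> w"
proof (induction w)
  case (Cons x w)
  have "der_word \<delta> (reduce (x # w)) = der_word \<delta> (x # reduce w)"
    by (simp add: reduce_Cons der_word_cr assms)
  also have "\<dots> = der_word \<delta> (x # w)"
    by (simp add: der_word_Cons Cons mono_eq_reduce)
  finally show ?case .
qed simp

lemma der_word_comm: "der_word (\<lambda>y. gen_el y * c - c * gen_el y) b = mono b * c - c * mono b"
proof (induction b)
  case (Cons x b)
  show ?case by (simp only: der_word_Cons Cons.IH mono_Cons) (simp add: algebra_simps)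
qed simp

lemma der_word_cong_gens:
  assumes inv1: "\<And>x. \<delta>1 x * gen_el (inv_l x) + gen_el x * \<delta>1 (inv_l x) = 0"
      and inv2: "\<And>x. \<delta>2 x * gen_el (inv_l x) + gen_el x * \<delta>2 (inv_l x) = 0"
      and "\<delta>1 lu = \<delta>2 lu" "\<delta>1 lv = \<delta>2 lv"
  shows "der_word \<delta>1 w = der_word \<delta>2 w"
proof (rule der_word_cong)
  have inv: "\<delta> (L g True) = - (gen_el (L g True) * \<delta> (L g False) * gen_el (L g True))"
    if "\<And>x. \<delta> x * gen_el (inv_l x) + gen_el x * \<delta> (inv_l x) = 0" for \<delta> g
  proof -
    have "\<delta> (L g False) * gen_el (L g True) + gen_el (L g False) * \<delta> (L g True) = 0"
      using that[of "L g False"] by simp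
    then have "gen_el (L g True) * (\<delta> (L g False) * gen_el (L g True) + gen_el (L g False) * \<delta> (L g True)) = 0"
      by simp
    then show ?thesis by (simp add: distrib_left mult.assoc eq_neg_iff_add_eq_0 add.commute)
  qed
  fix y
  show "\<delta>1 y = \<delta>2 y"
    using assms(3,4) inv[OF inv1] inv[OF inv2] by (cases y rule: letter_cases) auto
qed

definition der_word_op :: "(letter \<Rightarrow> A \<Rightarrow> A) \<Rightarrow> letter list \<Rightarrow> A \<Rightarrow> A" where
  "der_word_op \<delta> w m = (\<Sum>k<length w. \<delta> (w ! k) (mono (drop (Suc k) w) * m * mono (take k w)))"

lemma der_word_op_Nil[simp]: "der_word_op \<delta> [] m = 0" by (simp add: der_word_op_def)

lemma der_word_op_Cons: "der_word_op \<delta> (x # w) m = \<delta> x (mono w * m) + der_word_op \<delta> w (m * gen_el x)"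
  unfolding der_word_op_def
  by (simp add: sum.lessThan_Suc_shift mono_Cons mult.assoc del: sum.lessThan_Suc)

lemma der_word_op_append: "der_word_op \<delta> (a @ b) m = der_word_op \<delta> a (mono b * m) + der_word_op \<delta> b (m * mono a)"
  by (induction a arbitrary: m) (simp_all add: der_word_op_Cons mono_Cons mono_append algebra_simps)

lemma der_word_op_single[simp]: "der_word_op \<delta> [x] m = \<delta> x m"
  by (simp add: der_word_op_Cons)

lemma der_word_op_add: "der_word_op (\<lambda>y z. \<delta>1 y z + \<delta>2 y z) w m = der_word_op \<delta>1 w m + der_word_op \<delta>2 w m"
  by (simp add: der_word_op_def sum.distrib)

lemma der_word_op_zero: "der_word_op (\<lambda>y z. 0) w m = 0"
  by (simp add: der_word_op_def)

lemma der_word_op_lmult: "der_word_op (\<lambda>y z. p * \<delta> y z) w m = p * der_word_op \<delta> w m"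
  by (simp add: der_word_op_def sum_distrib_left)
lemma der_word_op_rmult: "der_word_op (\<lambda>y z. \<delta> y z * p) w m = der_word_op \<delta> w m * p"
  by (simp add: der_word_op_def sum_distrib_right)

lemma der_word_op_cr:
  assumes "\<And>x z. \<delta> x (gen_el (inv_l x) * z) + \<delta> (inv_l x) (z * gen_el x) = 0"
  shows "der_word_op \<delta> (cr x r) m = der_word_op \<delta> (x # r) m"
proof (cases r)
  case (Cons y r')
  show ?thesis
  proof (cases "y = inv_l x")
    case True
    have "der_word_op \<delta> (x # r) m = (\<delta> x (gen_el (inv_l x) * (mono r' * m)) + \<delta> (inv_l x) ((mono r' * m) * gen_el x))
        + der_word_op \<delta> r' m"
      using Cons True by (simp add: der_word_op_Cons mono_Cons mult.assoc gen_el_mult_inv_left gen_el_mult_inv)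
    then show ?thesis using Cons True assms by simp
  qed (use Cons in auto)
qed simp

lemma der_word_op_reduce:
  assumes "\<And>x z. \<delta> x (gen_el (inv_l x) * z) + \<delta> (inv_l x) (z * gen_el x) = 0"
  shows "der_word_op \<delta> (reduce w) m = der_word_op \<delta> w m"
proof (induction w arbitrary: m)
  case (Cons x w)
  have "der_word_op \<delta> (reduce (x # w)) m = der_word_op \<delta> (x # reduce w) m"
    by (simp add: reduce_Cons der_word_op_cr assms)
  also have "\<dots> = der_word_op \<delta> (x # w) m"
    by (simp add: der_word_op_Cons Cons mono_eq_reduce)
  finally show ?case .
qed simp


section \<open>The bracket of two words\<close>

text \<open>The middle slot \<open>z\<close> of \<open>lbr_op\<close> (with \<open>\<mu>\<close> recovered at \<open>z = 1\<close>) is what turns the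
  Leibniz rule in the first variable into a cyclic one.\<close>

definition lbr_op :: "letter \<Rightarrow> letter \<Rightarrow> A \<Rightarrow> A" where
  "lbr_op x y z = (case lbr x y of None \<Rightarrow> 0 | Some (c, X, Y) \<Rightarrow> cs c (mono X * z * mono Y))"

definition wbr_op :: "letter list \<Rightarrow> letter list \<Rightarrow> A \<Rightarrow> A" where
  "wbr_op a b m = (\<Sum>i<length a. \<Sum>j<length b.
      mono (take j b) * lbr_op (a ! i) (b ! j) (mono (drop (Suc i) a) * m * mono (take i a)) * mono (drop (Suc j) b))"

definition wbr :: "letter list \<Rightarrow> letter list \<Rightarrow> A" where
  "wbr a b = wbr_op a b 1"

lemma mu_dbr_word: "mu (dbr_word a b) = wbr a b"
  unfolding dbr_word_def wbr_def wbr_op_def mu_sum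
proof (intro sum.cong refl)
  fix i j
  show "mu (case lbr (a ! i) (b ! j) of None \<Rightarrow> 0
          | Some (c, x, y) \<Rightarrow> cs c (tens (mono (take j b) * mono x * mono (drop (Suc i) a))
                 (mono (take i a) * mono y * mono (drop (Suc j) b)))) =
        mono (take j b) * lbr_op (a ! i) (b ! j) (mono (drop (Suc i) a) * 1 * mono (take i a)) * mono (drop (Suc j) b)"
    by (auto simp: lbr_op_def mu_cs mu_tens cs_mult_left cs_mult_right mult.assoc split: option.split)
qed

lemma brK_eq_lin_ext: "brK a b = lin_ext (\<lambda>g. lin_ext (\<lambda>h. wbr (word g) (word h)) b) a"
  unfolding brK_def dbrK_def lin_ext_def mu_sum mu_cs mu_dbr_word
  by (simp add: cs_sum cs_cs)

lemma brK_add_left: "brK (a + a') b = brK a b + brK a' b"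
  by (simp add: brK_eq_lin_ext lin_ext_add)
lemma brK_add_right: "brK a (b + b') = brK a b + brK a b'"
  by (simp add: brK_eq_lin_ext lin_ext_add lin_ext_fun_add)
lemma brK_cs_left: "brK (cs c a) b = cs c (brK a b)"
  by (simp add: brK_eq_lin_ext lin_ext_cs)
lemma brK_cs_right: "brK a (cs c b) = cs c (brK a b)"
  by (simp add: brK_eq_lin_ext lin_ext_cs lin_ext_fun_cs)

lemma brK_zero_left[simp]: "brK 0 b = 0" by (simp add: brK_eq_lin_ext)
lemma brK_zero_right[simp]: "brK a 0 = 0" by (simp add: brK_eq_lin_ext lin_ext_def)

lemma brK_mono_reduce: "brK (mono a) (mono b) = wbr (reduce a) (reduce b)"
  by (simp add: brK_eq_lin_ext lin_ext_mono word_Abs_reduce)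

lemma wbr_op_eq_der_word: "wbr_op a b m = der_word (\<lambda>y. wbr_op a [y] m) b"
  unfolding wbr_op_def der_word_def
  by (simp add: sum_distrib_left sum_distrib_right) (rule sum.swap)

lemma wbr_op_right_letter: "wbr_op a [y] m = der_word_op (\<lambda>x z. lbr_op x y z) a m"
  unfolding wbr_op_def der_word_op_def by simp

lemma wbr_op_eq_der_word_op: "wbr_op a b m = der_word_op (\<lambda>x z. wbr_op [x] b z) a m"
  unfolding wbr_op_def der_word_op_def by simp

lemma wbr_op_left_letter: "wbr_op [x] b z = der_word (\<lambda>y. lbr_op x y z) b"
  unfolding wbr_op_def der_word_def by simp

lemma lbr_op_inv_right: "lbr_op x y z * gen_el (inv_l y) + gen_el y * lbr_op x (inv_l y) z = 0"
  by (cases x; cases y; rename_tac a b c d; case_tac a; case_tac b; case_tac c; case_tac d)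
     (simp_all add: lbr_op_def mono_def mult.assoc cs_minus_one)

lemma lbr_op_inv_left: "lbr_op x y (gen_el (inv_l x) * z) + lbr_op (inv_l x) y (z * gen_el x) = 0"
  by (cases x; cases y; rename_tac a b c d; case_tac a; case_tac b; case_tac c; case_tac d)
     (simp_all add: lbr_op_def mono_def mult.assoc cs_minus_one)

lemma wbr_op_inv_right: "wbr_op a [y] m * gen_el (inv_l y) + gen_el y * wbr_op a [inv_l y] m = 0"
proof -
  have "wbr_op a [y] m * gen_el (inv_l y) + gen_el y * wbr_op a [inv_l y] m
      = der_word_op (\<lambda>x z. lbr_op x y z * gen_el (inv_l y) + gen_el y * lbr_op x (inv_l y) z) a m"
    by (simp add: wbr_op_right_letter der_word_op_add der_word_op_lmult der_word_op_rmult)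
  also have "\<dots> = 0" by (simp add: lbr_op_inv_right der_word_op_zero)
  finally show ?thesis .
qed

lemma wbr_op_inv_left: "wbr_op [x] b (gen_el (inv_l x) * z) + wbr_op [inv_l x] b (z * gen_el x) = 0"
proof -
  have "wbr_op [x] b (gen_el (inv_l x) * z) + wbr_op [inv_l x] b (z * gen_el x)
     = der_word (\<lambda>y. lbr_op x y (gen_el (inv_l x) * z) + lbr_op (inv_l x) y (z * gen_el x)) b"
    by (simp add: wbr_op_left_letter der_word_add)
  also have "\<dots> = 0" by (simp add: lbr_op_inv_left der_word_zero)
  finally show ?thesis .
qed

lemma wbr_op_reduce_right: "wbr_op a (reduce b) m = wbr_op a b m"
  by (simp add: wbr_op_eq_der_word[of a "reduce b"] wbr_op_eq_der_word[of a b] der_word_reduce wbr_op_inv_right)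

lemma wbr_op_reduce_left: "wbr_op (reduce a) b m = wbr_op a b m"
  by (simp add: wbr_op_eq_der_word_op[of "reduce a"] wbr_op_eq_der_word_op[of a] der_word_op_reduce wbr_op_inv_left)

lemma wbr_reduce_left: "wbr (reduce a) b = wbr a b" by (simp add: wbr_def wbr_op_reduce_left)
lemma wbr_reduce_right: "wbr a (reduce b) = wbr a b" by (simp add: wbr_def wbr_op_reduce_right)

lemma brK_mono: "brK (mono a) (mono b) = wbr a b"
  by (simp add: brK_mono_reduce wbr_reduce_left wbr_reduce_right)

lemma wbr_append_right: "wbr a (b @ c) = wbr a b * mono c + mono b * wbr a c"
  by (simp add: wbr_def wbr_op_eq_der_word[of a "b @ c"] wbr_op_eq_der_word[of a b] wbr_op_eq_der_word[of a c]
      der_word_append)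

lemma wbr_op_append_left: "wbr_op (a @ b) c m = wbr_op a c (mono b * m) + wbr_op b c (m * mono a)"
  by (simp add: wbr_op_eq_der_word_op[of "a @ b"] wbr_op_eq_der_word_op[of a] wbr_op_eq_der_word_op[of b]
      der_word_op_append)

lemma wbr_cyclic: "wbr (a @ b) c = wbr (b @ a) c"
  by (simp add: wbr_def wbr_op_append_left add.commute)

lemma brK_mult_right: "brK a (b * c) = brK a b * c + b * brK a c"
proof -
  have mono3: "brK (mono p) (mono q * mono r) = brK (mono p) (mono q) * mono r + mono q * brK (mono p) (mono r)"
    for p q r by (simp add: mono_append[symmetric] brK_mono wbr_append_right)
  have mono2: "brK (mono p) (mono q * c) = brK (mono p) (mono q) * c + mono q * brK (mono p) c" for p q
    by (rule A_linear_eqI[where F = "\<lambda>c. brK (mono p) (mono q * c)"])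
       (simp_all add: mono3 distrib_left distrib_right brK_add_right brK_cs_right cs_mult_right cs_add_right)
  have mono1: "brK (mono p) (b * c) = brK (mono p) b * c + b * brK (mono p) c" for p
    by (rule A_linear_eqI[where F = "\<lambda>b. brK (mono p) (b * c)"])
       (simp_all add: mono2 distrib_right brK_add_right brK_cs_right cs_mult_left cs_mult_right cs_add_right
         algebra_simps)
  show ?thesis
    by (rule A_linear_eqI[where F = "\<lambda>a. brK a (b * c)"])
       (simp_all add: mono1 brK_add_left brK_cs_left cs_mult_left cs_mult_right cs_add_right algebra_simps)
qed

lemma brK_cyclic: "brK (a * b) c = brK (b * a) c"
proof -
  have mono3: "brK (mono p * mono q) (mono r) = brK (mono q * mono p) (mono r)" for p q r
    by (simp add: mono_append[symmetric] brK_mono wbr_cyclic)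
  have mono2: "brK (mono p * mono q) c = brK (mono q * mono p) c" for p q
    by (rule A_linear_eqI[where F = "\<lambda>c. brK (mono p * mono q) c"])
       (simp_all add: mono3 brK_add_right brK_cs_right)
  have mono1: "brK (mono p * b) c = brK (b * mono p) c" for p
    by (rule A_linear_eqI[where F = "\<lambda>b. brK (mono p * b) c"])
       (simp_all add: mono2 distrib_left distrib_right brK_add_left brK_cs_left cs_mult_left cs_mult_right)
  show ?thesis
    by (rule A_linear_eqI[where F = "\<lambda>a. brK (a * b) c"])
       (simp_all add: mono1 distrib_left distrib_right brK_add_left brK_cs_left cs_mult_left cs_mult_right)
qed


declare rotate_Suc[simp del]

definition cyc_sum :: "('a list \<Rightarrow> 'b::comm_monoid_add) \<Rightarrow> 'a list \<Rightarrow> 'b" where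
  "cyc_sum H p = (\<Sum>k<length p. H (rotate k p))"

lemma cyc_sum_add: "cyc_sum (\<lambda>r. F r + G r) p = cyc_sum F p + cyc_sum G p"
  by (simp add: cyc_sum_def sum.distrib)
lemma cyc_sum_diff:
  fixes F G :: "'a list \<Rightarrow> 'b::ab_group_add"
  shows "cyc_sum (\<lambda>r. F r - G r) p = cyc_sum F p - cyc_sum G p"
  by (simp add: cyc_sum_def sum_subtractf)
lemma cyc_sum_minus:
  fixes F :: "'a list \<Rightarrow> 'b::ab_group_add"
  shows "cyc_sum (\<lambda>r. - F r) p = - cyc_sum F p"
  by (simp add: cyc_sum_def sum_negf)
lemma cyc_sum_rmult:
  fixes H :: "'a list \<Rightarrow> 'b::semiring_0"
  shows "cyc_sum H p * c = cyc_sum (\<lambda>r. H r * c) p"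
  by (simp add: cyc_sum_def sum_distrib_right)
lemma cyc_sum_lmult:
  fixes H :: "'a list \<Rightarrow> 'b::semiring_0"
  shows "c * cyc_sum H p = cyc_sum (\<lambda>r. c * H r) p"
  by (simp add: cyc_sum_def sum_distrib_left)

lemma cyc_sum_cong: "(\<And>r. r \<noteq> [] \<Longrightarrow> F r = G r) \<Longrightarrow> cyc_sum F p = cyc_sum G p"
  unfolding cyc_sum_def
  by (rule sum.cong) (auto, metis lessThan_iff less_nat_zero_code list.size(3) rotate_is_Nil_conv)
lemma cyc_sum_zero: "(\<And>r. r \<noteq> [] \<Longrightarrow> F r = 0) \<Longrightarrow> cyc_sum F p = 0"
  unfolding cyc_sum_def
  by (rule sum.neutral) (metis lessThan_iff less_nat_zero_code list.size(3) rotate_is_Nil_conv)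

lemma rotate_nth_cons: "k < length p \<Longrightarrow> rotate k p = p ! k # (drop (Suc k) p @ take k p)"
  by (simp add: rotate_drop_take Cons_nth_drop_Suc)

lemma rotate_Suc_cons: "t \<le> length w \<Longrightarrow> rotate (Suc t) (x # w) = drop t w @ x # take t w"
proof (cases "t = length w")
  case True
  have "rotate (Suc t) (x # w) = rotate (length (x # w)) (x # w)" using True by simp
  also have "\<dots> = x # w" by (rule rotate_id) simp
  finally show ?thesis using True by simp
next
  case False
  assume "t \<le> length w"
  with False have "t < length w" by simp
  then show ?thesis by (simp add: rotate_drop_take)
qed

lemma last_rotate_Suc: "k < length p \<Longrightarrow> last (rotate (Suc k) p) = p ! k"
proof -
  assume k: "k < length p"
  show ?thesis
  proof (cases "Suc k = length p")
    case True
    then have "rotate (Suc k) p = p" by (simp add: rotate_id)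
    moreover have "p \<noteq> []" using k by auto
    moreover have "length p - 1 = k" using True by simp
    ultimately show ?thesis by (simp add: last_conv_nth)
  next
    case False
    then have "Suc k < length p" using k by simp
    then show ?thesis
      by (simp add: rotate_drop_take last_append take_Suc_conv_app_nth[OF k])
  qed
qed

lemma sum_lessThan_mod_shift1:
  fixes g :: "nat \<Rightarrow> 'a::comm_monoid_add"
  assumes "0 < n"
  shows "(\<Sum>j<n. g ((j + 1) mod n)) = (\<Sum>j<n. g j)"
proof -
  obtain m where n: "n = Suc m" using assms by (cases n) auto
  have "(\<Sum>j<Suc m. g ((j + 1) mod Suc m)) = (\<Sum>j<m. g ((j + 1) mod Suc m)) + g 0"
    by (simp add: add.commute)
  also have "(\<Sum>j<m. g ((j + 1) mod Suc m)) = (\<Sum>j<m. g (Suc j))"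
    by (rule sum.cong) auto
  also have "(\<Sum>j<m. g (Suc j)) + g 0 = (\<Sum>j<Suc m. g j)"
    by (simp add: sum.lessThan_Suc_shift add.commute del: sum.lessThan_Suc)
  finally show ?thesis using n by simp
qed

lemma sum_lessThan_mod_shift:
  fixes g :: "nat \<Rightarrow> 'a::comm_monoid_add"
  assumes "0 < n"
  shows "(\<Sum>j<n. g ((j + s) mod n)) = (\<Sum>j<n. g j)"
proof (induction s arbitrary: g)
  case 0 then show ?case by (intro sum.cong) auto
next
  case (Suc s)
  have "(\<Sum>j<n. g ((j + Suc s) mod n)) = (\<Sum>j<n. (\<lambda>i. g ((i + s) mod n)) ((j + 1) mod n))"
    by (intro sum.cong refl) (simp add: mod_add_left_eq)
  also have "\<dots> = (\<Sum>j<n. g ((j + s) mod n))" by (rule sum_lessThan_mod_shift1[OF assms])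
  also have "\<dots> = (\<Sum>j<n. g j)" by (rule Suc)
  finally show ?case .
qed

lemma sum_sum_rotate_reindex:
  fixes G :: "nat \<Rightarrow> nat \<Rightarrow> 'a::comm_monoid_add"
  shows "(\<Sum>c<n. \<Sum>k<n. G c k) = (\<Sum>j<n. \<Sum>t<n. G ((j + t + 1) mod n) (n - 1 - t))"
proof (cases "n = 0")
  case False
  then have n: "0 < n" by simp
  have "(\<Sum>j<n. \<Sum>t<n. G ((j + t + 1) mod n) (n - 1 - t)) = (\<Sum>t<n. \<Sum>j<n. G ((j + (t + 1)) mod n) (n - 1 - t))"
    by (subst sum.swap) (simp add: add.assoc)
  also have "\<dots> = (\<Sum>t<n. \<Sum>c<n. G c (n - 1 - t))"
    by (intro sum.cong refl sum_lessThan_mod_shift[OF n])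
  also have "\<dots> = (\<Sum>c<n. \<Sum>t<n. G c (n - Suc t))"
    by (subst sum.swap) simp
  also have "\<dots> = (\<Sum>c<n. \<Sum>k<n. G c k)"
    by (rule sum.cong[OF refl]) (rule sum.nat_diff_reindex)
  finally show ?thesis by simp
qed simp

lemma cyc_sum_shift:
  fixes F :: "'a \<Rightarrow> 'a list \<Rightarrow> 'b::ab_group_add"
  shows "(\<Sum>k<length p. F (p ! k) (rotate (Suc k) p)) = cyc_sum (\<lambda>r. F (last r) r) p"
proof (cases "p = []")
  case False
  let ?n = "length p"
  define h where "h j = F (last (rotate j p)) (rotate j p)" for j
  have "(\<Sum>k<?n. F (p ! k) (rotate (Suc k) p)) = (\<Sum>k<?n. h (Suc k))"
    by (intro sum.cong refl) (simp add: h_def last_rotate_Suc)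
  also have "\<dots> = (\<Sum>k<Suc ?n. h k) - h 0"
    by (simp add: sum.lessThan_Suc_shift del: sum.lessThan_Suc)
  also have "\<dots> = (\<Sum>k<?n. h k) + h ?n - h 0" by simp
  also have "h ?n = h 0" by (simp add: h_def)
  finally show ?thesis by (simp add: cyc_sum_def h_def)
qed (simp add: cyc_sum_def)

lemma cyc_sum_shift_hd:
  fixes F :: "'a \<Rightarrow> 'a list \<Rightarrow> 'b::ab_group_add"
  shows "cyc_sum (\<lambda>r. F (hd r) (rotate 1 r)) p = cyc_sum (\<lambda>r. F (last r) r) p"
proof -
  have "cyc_sum (\<lambda>r. F (hd r) (rotate 1 r)) p = (\<Sum>k<length p. F (p ! k) (rotate (Suc k) p))"
    unfolding cyc_sum_def
  proof (rule sum.cong[OF refl])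
    fix k assume "k \<in> {..<length p}"
    then have "hd (rotate k p) = p ! k" by (simp add: rotate_nth_cons)
    moreover have "rotate 1 (rotate k p) = rotate (Suc k) p" by (simp add: rotate_rotate)
    ultimately show "F (hd (rotate k p)) (rotate 1 (rotate k p)) = F (p ! k) (rotate (Suc k) p)" by simp
  qed
  then show ?thesis by (simp add: cyc_sum_shift)
qed

lemma der_word_op_eq_cyc_sum: "der_word_op \<delta> p 1 = cyc_sum (\<lambda>r. \<delta> (hd r) (mono (tl r))) p"
  unfolding der_word_op_def cyc_sum_def
  by (intro sum.cong refl) (simp add: rotate_nth_cons mono_append)

section \<open>Skew-symmetry modulo commutators\<close>

interpretation A_module: module "cs :: complex \<Rightarrow> A \<Rightarrow> A"
  by unfold_locales (simp_all add: cs_add_right cs_add_left cs_cs)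

lemma commA_eq_span: "commA = A_module.span {x * y - y * x | x y. True}"
  by (simp add: commA_def)

lemma commutator_in_commA: "x * y - y * x \<in> commA"
  unfolding commA_eq_span by (rule A_module.span_base) blast

lemma commA_add: "x \<in> commA \<Longrightarrow> y \<in> commA \<Longrightarrow> x + y \<in> commA"
  unfolding commA_eq_span by (rule A_module.span_add)

lemma cs_commutator_in_commA: "cs c (x * y - y * x) \<in> commA"
  unfolding commA_eq_span by (intro A_module.span_scale A_module.span_base) blast

lemma commA_zero: "0 \<in> commA"
  unfolding commA_eq_span by (rule A_module.span_zero)

lemma commA_sum: "(\<And>i. i \<in> I \<Longrightarrow> f i \<in> commA) \<Longrightarrow> sum f I \<in> commA"
  unfolding commA_eq_span by (rule A_module.span_sum)

lemma linear_in_commAI: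
  assumes "\<And>x y. F (x + y) = F x + F y" "\<And>c x. F (cs c x) = cs c (F x)" "\<And>w. F (mono w) \<in> commA"
  shows "F a \<in> commA"
proof (induction a rule: A_mono_induct)
  case zero
  have "F 0 = 0" using assms(2)[of 0 0] by simp
  then show ?case by (simp add: commA_zero)
next
  case (add f c w)
  then show ?case using assms unfolding commA_eq_span by (simp add: A_module.span_add A_module.span_scale)
qed

definition lbr_op_rev :: "letter \<Rightarrow> letter \<Rightarrow> A \<Rightarrow> A" where
  "lbr_op_rev x y z = (case lbr x y of None \<Rightarrow> 0 | Some (c, X, Y) \<Rightarrow> cs c (mono Y * z * mono X))"

definition wbr_rev :: "letter list \<Rightarrow> letter list \<Rightarrow> A" where
  "wbr_rev b a = (\<Sum>i<length b. \<Sum>j<length a.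
      mono (take i b) * lbr_op_rev (b ! i) (a ! j) (mono (drop (Suc j) a) * mono (take j a)) * mono (drop (Suc i) b))"

lemma wbr_diff_rev_in_commA: "wbr b a - wbr_rev b a \<in> commA"
proof -
  have "wbr b a - wbr_rev b a = (\<Sum>i<length b. \<Sum>j<length a.
     (case lbr (b ! i) (a ! j) of None \<Rightarrow> 0 | Some (c, X, Y) \<Rightarrow>
        cs c ((mono (take j a) * mono X * mono (drop (Suc i) b))
                * (mono (take i b) * mono Y * mono (drop (Suc j) a))
            - (mono (take i b) * mono Y * mono (drop (Suc j) a))
                * (mono (take j a) * mono X * mono (drop (Suc i) b)))))"
    unfolding wbr_def wbr_op_def wbr_rev_def sum_subtractf[symmetric]
    by (intro sum.cong refl)
       (auto simp: lbr_op_def lbr_op_rev_def cs_mult_left cs_mult_right cs_diff mult.assoc split: option.split)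
  also have "\<dots> \<in> commA"
    by (intro commA_sum) (auto split: option.split simp: commA_zero cs_commutator_in_commA)
  finally show ?thesis .
qed

lemma wbr_rev_eq_der_word: "wbr_rev b a = der_word (\<lambda>y. wbr_rev [y] a) b"
  unfolding wbr_rev_def der_word_def by (simp add: sum_distrib_left sum_distrib_right)

lemma lbr_op_rev_inv_left: "lbr_op_rev y x z * gen_el (inv_l y) + gen_el y * lbr_op_rev (inv_l y) x z = 0"
  by (cases x rule: letter_cases; cases y rule: letter_cases)
     (simp_all add: lbr_op_rev_def mono_def mult.assoc cs_minus_one)

lemma wbr_rev_inv_left: "wbr_rev [y] a * gen_el (inv_l y) + gen_el y * wbr_rev [inv_l y] a = 0"
proof -
  have "wbr_rev [y] a * gen_el (inv_l y) + gen_el y * wbr_rev [inv_l y] a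
     = (\<Sum>j<length a. lbr_op_rev y (a ! j) (mono (drop (Suc j) a) * mono (take j a)) * gen_el (inv_l y)
          + gen_el y * lbr_op_rev (inv_l y) (a ! j) (mono (drop (Suc j) a) * mono (take j a)))"
    by (simp add: wbr_rev_def sum_distrib_left sum_distrib_right sum.distrib)
  also have "\<dots> = 0" by (simp add: lbr_op_rev_inv_left)
  finally show ?thesis .
qed

lemma wbr_rev_letter_eq_cyc_sum: "wbr_rev [y] a = cyc_sum (\<lambda>r. lbr_op_rev y (hd r) (mono (tl r))) a"
proof -
  have "wbr_rev [y] a = (\<Sum>j<length a. lbr_op_rev y (a ! j) (mono (drop (Suc j) a) * mono (take j a)))"
    by (simp add: wbr_rev_def)
  also have "\<dots> = cyc_sum (\<lambda>r. lbr_op_rev y (hd r) (mono (tl r))) a"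
    unfolding cyc_sum_def by (intro sum.cong refl) (simp add: rotate_nth_cons mono_append)
  finally show ?thesis .
qed

definition rot_pos :: "bool \<Rightarrow> letter list \<Rightarrow> A" where
  "rot_pos g r = (if hd r = L g False then mono r else 0) - (if hd r = L g True then mono (rotate 1 r) else 0)"
definition rot_neg :: "bool \<Rightarrow> letter list \<Rightarrow> A" where
  "rot_neg g r = (if hd r = L g False then mono (rotate 1 r) else 0) - (if hd r = L g True then mono r else 0)"

definition skew_wit :: "letter list \<Rightarrow> A" where
  "skew_wit a = cyc_sum (rot_neg True) a - cyc_sum (rot_pos False) a"

lemma lbr_op_add_rev_lu:
  "lbr_op x lu (mono w) + lbr_op_rev lu x (mono w)
     = gen_el lu * rot_pos True (x # w) - rot_neg True (x # w) * gen_el lu"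
  by (cases x rule: letter_cases)
     (simp_all add: lbr_op_def lbr_op_rev_def rot_pos_def rot_neg_def mono_Cons mono_snoc rotate_Suc mult.assoc
       cs_minus_one)

lemma lbr_op_add_rev_lv:
  "lbr_op x lv (mono w) + lbr_op_rev lv x (mono w)
     = - (gen_el lv * rot_pos False (x # w)) + rot_neg False (x # w) * gen_el lv"
  by (cases x rule: letter_cases)
     (simp_all add: lbr_op_def lbr_op_rev_def rot_pos_def rot_neg_def mono_Cons mono_snoc rotate_Suc mult.assoc
       cs_minus_one)

lemma rot_neg_commute_lu: "gen_el lu * rot_neg False (x # w) = rot_pos False (x # w) * gen_el lu"
  by (cases x rule: letter_cases) (simp_all add: rot_pos_def rot_neg_def mono_Cons mono_snoc rotate_Suc mult.assoc)

lemma rot_pos_commute_lv: "rot_pos True (x # w) * gen_el lv = gen_el lv * rot_neg True (x # w)"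
  by (cases x rule: letter_cases) (simp_all add: rot_pos_def rot_neg_def mono_Cons mono_snoc rotate_Suc mult.assoc)

lemma cyc_sum_rot_neg_False:
  "cyc_sum (rot_neg False) a = cyc_sum (rot_pos True) a + cyc_sum (rot_pos False) a - cyc_sum (rot_neg True) a"
proof -
  have "cyc_sum (rot_pos True) a + cyc_sum (rot_pos False) a - cyc_sum (rot_neg True) a - cyc_sum (rot_neg False) a
      = cyc_sum (\<lambda>r. mono r) a - cyc_sum (\<lambda>r. mono (rotate 1 r)) a"
    unfolding cyc_sum_add[symmetric] cyc_sum_diff[symmetric]
  proof (rule cyc_sum_cong)
    fix r :: "letter list"
    assume "r \<noteq> []"
    then obtain x w where "r = x # w" by (cases r) auto
    then show "rot_pos True r + rot_pos False r - rot_neg True r - rot_neg False r = mono r - mono (rotate 1 r)"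
      by (cases x rule: letter_cases) (simp_all add: rot_pos_def rot_neg_def)
  qed
  also have "cyc_sum (\<lambda>r. mono (rotate 1 r)) a = cyc_sum (\<lambda>r. mono r) a"
    using cyc_sum_shift_hd[of "\<lambda>x r. mono r" a] by simp
  finally show ?thesis by (simp add: algebra_simps)
qed

lemma wbr_add_rev_lu: "wbr a [lu] + wbr_rev [lu] a = gen_el lu * skew_wit a - skew_wit a * gen_el lu"
proof -
  have "wbr a [lu] + wbr_rev [lu] a = gen_el lu * cyc_sum (rot_pos True) a - cyc_sum (rot_neg True) a * gen_el lu"
    unfolding wbr_def wbr_op_right_letter der_word_op_eq_cyc_sum wbr_rev_letter_eq_cyc_sum
      cyc_sum_add[symmetric] cyc_sum_lmult cyc_sum_rmult cyc_sum_diff[symmetric]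
    by (rule cyc_sum_cong) (auto simp: neq_Nil_conv lbr_op_add_rev_lu)
  moreover have "gen_el lu * cyc_sum (rot_neg False) a = cyc_sum (rot_pos False) a * gen_el lu"
    unfolding cyc_sum_lmult cyc_sum_rmult by (rule cyc_sum_cong) (auto simp: neq_Nil_conv rot_neg_commute_lu)
  ultimately show ?thesis unfolding skew_wit_def cyc_sum_rot_neg_False by (simp add: algebra_simps)
qed

lemma wbr_add_rev_lv: "wbr a [lv] + wbr_rev [lv] a = gen_el lv * skew_wit a - skew_wit a * gen_el lv"
proof -
  have "wbr a [lv] + wbr_rev [lv] a = - (gen_el lv * cyc_sum (rot_pos False) a) + cyc_sum (rot_neg False) a * gen_el lv"
    unfolding wbr_def wbr_op_right_letter der_word_op_eq_cyc_sum wbr_rev_letter_eq_cyc_sum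
      cyc_sum_add[symmetric] cyc_sum_lmult cyc_sum_rmult cyc_sum_minus[symmetric]
    by (rule cyc_sum_cong) (auto simp: neq_Nil_conv lbr_op_add_rev_lv)
  moreover have "cyc_sum (rot_pos True) a * gen_el lv = gen_el lv * cyc_sum (rot_neg True) a"
    unfolding cyc_sum_lmult cyc_sum_rmult by (rule cyc_sum_cong) (auto simp: neq_Nil_conv rot_pos_commute_lv)
  ultimately show ?thesis unfolding skew_wit_def cyc_sum_rot_neg_False by (simp add: algebra_simps)
qed

lemma wbr_add_rev_eq_commutator: "wbr a b + wbr_rev b a = mono b * skew_wit a - skew_wit a * mono b"
proof -
  have "wbr a b + wbr_rev b a = der_word (\<lambda>y. wbr a [y] + wbr_rev [y] a) b"
    by (simp add: wbr_def wbr_op_eq_der_word[of a b] wbr_rev_eq_der_word[of b a] der_word_add)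
  also have "\<dots> = der_word (\<lambda>y. gen_el y * skew_wit a - skew_wit a * gen_el y) b"
  proof (rule der_word_cong_gens)
    fix x
    show "(wbr a [x] + wbr_rev [x] a) * gen_el (inv_l x) + gen_el x * (wbr a [inv_l x] + wbr_rev [inv_l x] a) = 0"
      using wbr_op_inv_right[of a x 1] wbr_rev_inv_left[of x a] by (simp add: wbr_def algebra_simps)
    show "(gen_el x * skew_wit a - skew_wit a * gen_el x) * gen_el (inv_l x)
        + gen_el x * (gen_el (inv_l x) * skew_wit a - skew_wit a * gen_el (inv_l x)) = 0"
      by (simp add: algebra_simps gen_el_mult_inv_left gen_el_mult_inv)
  qed (simp_all add: wbr_add_rev_lu wbr_add_rev_lv)
  also have "\<dots> = mono b * skew_wit a - skew_wit a * mono b" by (rule der_word_comm)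
  finally show ?thesis .
qed

lemma wbr_skew_mod_commA: "wbr a b + wbr b a \<in> commA"
proof -
  have "wbr a b + wbr b a = (mono b * skew_wit a - skew_wit a * mono b) + (wbr b a - wbr_rev b a)"
    using wbr_add_rev_eq_commutator[of a b] by (simp add: algebra_simps)
  also have "\<dots> \<in> commA"
    by (intro commA_add commutator_in_commA wbr_diff_rev_in_commA)
  finally show ?thesis .
qed

lemma brK_skew_mod_commA: "brK a b + brK b a \<in> commA"
proof -
  have mono: "brK (mono p) b + brK b (mono p) \<in> commA" for p
    by (rule linear_in_commAI[where F = "\<lambda>b. brK (mono p) b + brK b (mono p)"])
       (simp_all add: brK_add_left brK_add_right brK_cs_left brK_cs_right cs_add_right add_ac brK_mono
         wbr_skew_mod_commA)
  show ?thesis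
  proof (rule linear_in_commAI[where F = "\<lambda>a. brK a b + brK b a"])
    show "brK (mono w) b + brK b (mono w) \<in> commA" for w by (rule mono)
  qed (simp_all add: brK_add_left brK_add_right brK_cs_left brK_cs_right cs_add_right add_ac)
qed

definition dv_letter :: "letter \<Rightarrow> A \<Rightarrow> A" where
  "dv_letter x z = (if x = lv then gen_el lv * z else if x = lV then - (z * gen_el lV) else 0)"
definition du_letter :: "letter \<Rightarrow> A \<Rightarrow> A" where
  "du_letter x z = (if x = lu then gen_el lu * z else if x = lU then - (z * gen_el lU) else 0)"

definition dv_word :: "letter list \<Rightarrow> A \<Rightarrow> A" where "dv_word w m = der_word_op dv_letter w m"
definition du_word :: "letter list \<Rightarrow> A \<Rightarrow> A" where "du_word w m = der_word_op du_letter w m"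

lemma dv_letter_lv: "dv_letter lv z = gen_el lv * z" by (simp add: dv_letter_def)
lemma dv_letter_lV: "dv_letter lV z = - (z * gen_el lV)" by (simp add: dv_letter_def)
lemma dv_letter_other: "x \<noteq> lv \<Longrightarrow> x \<noteq> lV \<Longrightarrow> dv_letter x z = 0" by (simp add: dv_letter_def)

lemma dv_letter_add: "dv_letter x (a + b) = dv_letter x a + dv_letter x b"
  by (simp add: dv_letter_def algebra_simps)
lemma dv_letter_cs: "dv_letter x (cs c a) = cs c (dv_letter x a)"
  by (simp add: dv_letter_def cs_mult_left cs_mult_right cs_minus)
lemma du_letter_cs: "du_letter x (cs c a) = cs c (du_letter x a)"
  by (simp add: du_letter_def cs_mult_left cs_mult_right cs_minus)

lemma dv_word_add: "dv_word w (a + b) = dv_word w a + dv_word w b"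
  by (simp add: dv_word_def der_word_op_def algebra_simps dv_letter_add sum.distrib)
lemma dv_word_cs: "dv_word w (cs c a) = cs c (dv_word w a)"
  by (simp add: dv_word_def der_word_op_def cs_mult_left cs_mult_right dv_letter_cs cs_sum)
lemma du_word_cs: "du_word w (cs c a) = cs c (du_word w a)"
  by (simp add: du_word_def der_word_op_def cs_mult_left cs_mult_right du_letter_cs cs_sum)
lemma dv_word_zero[simp]: "dv_word w 0 = 0" using dv_word_cs[of w 0 0] by simp
lemma du_word_zero[simp]: "du_word w 0 = 0" using du_word_cs[of w 0 0] by simp

lemma dv_letter_inv: "dv_letter x (gen_el (inv_l x) * z) + dv_letter (inv_l x) (z * gen_el x) = 0"
  by (cases x rule: letter_cases) (simp_all add: dv_letter_def mult.assoc)
lemma du_letter_inv: "du_letter x (gen_el (inv_l x) * z) + du_letter (inv_l x) (z * gen_el x) = 0"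
  by (cases x rule: letter_cases) (simp_all add: du_letter_def mult.assoc)

lemma dv_word_reduce: "dv_word (reduce w) m = dv_word w m"
  by (simp add: dv_word_def der_word_op_reduce dv_letter_inv)
lemma du_word_reduce: "du_word (reduce w) m = du_word w m"
  by (simp add: du_word_def der_word_op_reduce du_letter_inv)

lemma dv_word_append: "dv_word (a @ b) m = dv_word a (mono b * m) + dv_word b (m * mono a)"
  by (simp add: dv_word_def der_word_op_append)

definition phi_v :: "A \<Rightarrow> A" where "phi_v y = lin_word (\<lambda>w. dv_word w 1) y"
definition phi_u :: "A \<Rightarrow> A" where "phi_u y = lin_word (\<lambda>w. du_word w 1) y"
definition dv_lin :: "A \<Rightarrow> A \<Rightarrow> A" where "dv_lin y m = lin_word (\<lambda>w. dv_word w m) y"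

lemma phi_v_mono: "phi_v (mono w) = dv_word w 1" by (simp add: phi_v_def lin_word_mono dv_word_reduce)
lemma phi_u_mono: "phi_u (mono w) = du_word w 1" by (simp add: phi_u_def lin_word_mono du_word_reduce)
lemma dv_lin_mono: "dv_lin (mono w) m = dv_word w m" by (simp add: dv_lin_def lin_word_mono dv_word_reduce)
lemma dv_lin_one: "dv_lin y 1 = phi_v y" by (simp add: dv_lin_def phi_v_def)

lemma phi_v_eq_cyc_sum: "phi_v (mono p) = cyc_sum (\<lambda>r. dv_letter (hd r) (mono (tl r))) p"
  by (simp add: phi_v_mono dv_word_def der_word_op_eq_cyc_sum)
lemma phi_u_eq_cyc_sum: "phi_u (mono p) = cyc_sum (\<lambda>r. du_letter (hd r) (mono (tl r))) p"
  by (simp add: phi_u_mono du_word_def der_word_op_eq_cyc_sum)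

lemma dv_lin_add_left: "dv_lin (a + b) m = dv_lin a m + dv_lin b m" by (simp add: dv_lin_def lin_word_add)
lemma dv_lin_cs_left: "dv_lin (cs c a) m = cs c (dv_lin a m)" by (simp add: dv_lin_def lin_word_cs)
lemma dv_lin_add_right: "dv_lin y (a + b) = dv_lin y a + dv_lin y b"
  by (simp add: dv_lin_def dv_word_add lin_word_fun_add)
lemma dv_lin_cs_right: "dv_lin y (cs c a) = cs c (dv_lin y a)"
  by (simp add: dv_lin_def dv_word_cs lin_word_fun_cs)
lemma dv_lin_zero_left[simp]: "dv_lin 0 m = 0" by (simp add: dv_lin_def)
lemma dv_lin_zero_right[simp]: "dv_lin y 0 = 0" by (simp add: dv_lin_def)
lemma dv_lin_minus_left: "dv_lin (- y) m = - dv_lin y m"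
  using dv_lin_cs_left[of "-1" y m] by (simp add: cs_minus_one)
lemma dv_lin_sum: "dv_lin (sum f S) z = (\<Sum>x\<in>S. dv_lin (f x) z)"
  by (induction S rule: infinite_finite_induct) (auto simp: dv_lin_add_left)
lemma dv_lin_cyc_sum: "dv_lin (cyc_sum H p) z = cyc_sum (\<lambda>r. dv_lin (H r) z) p"
  by (simp add: cyc_sum_def dv_lin_sum)

lemma dv_lin_mult: "dv_lin (x * y) m = dv_lin x (y * m) + dv_lin y (m * x)"
proof -
  have mono2: "dv_lin (mono p * mono q) m = dv_lin (mono p) (mono q * m) + dv_lin (mono q) (m * mono p)" for p q m
    by (simp add: mono_append[symmetric] dv_lin_mono dv_word_append)
  have mono1: "dv_lin (mono p * y) m = dv_lin (mono p) (y * m) + dv_lin y (m * mono p)" for p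
    by (rule A_linear_eqI[where F = "\<lambda>y. dv_lin (mono p * y) m"])
       (simp_all add: mono2 distrib_left distrib_right dv_lin_add_left dv_lin_add_right dv_lin_cs_left
         dv_lin_cs_right cs_mult_left cs_mult_right cs_add_right)
  show ?thesis
    by (rule A_linear_eqI[where F = "\<lambda>x. dv_lin (x * y) m"])
       (simp_all add: mono1 distrib_left distrib_right dv_lin_add_left dv_lin_add_right dv_lin_cs_left
         dv_lin_cs_right cs_mult_left cs_mult_right cs_add_right)
qed

lemma dv_lin_dv_letter:
  "dv_lin (dv_letter x (mono w)) m = of_bool (x = lv) * dv_word (x # w) m - of_bool (x = lV) * dv_word (w @ [x]) m"
  by (cases x rule: letter_cases)
     (simp_all add: dv_letter_def mono_Cons[symmetric] mono_snoc[symmetric] dv_lin_mono dv_lin_minus_left)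

lemma dv_lin_du_letter:
  "dv_lin (du_letter x (mono w)) m = of_bool (x = lu) * dv_word (x # w) m - of_bool (x = lU) * dv_word (w @ [x]) m"
  by (cases x rule: letter_cases)
     (simp_all add: du_letter_def mono_Cons[symmetric] mono_snoc[symmetric] dv_lin_mono dv_lin_minus_left)

lemma brK_one: "brK a 1 = 0"
  using brK_mult_right[of a 1 1] by simp

lemma lbr_op_lu: "lbr_op x lu z = gen_el lu * dv_letter x z"
  by (cases x rule: letter_cases) (simp_all add: lbr_op_def dv_letter_def mono_def mult.assoc cs_minus_one)
lemma lbr_op_lv: "lbr_op x lv z = - (gen_el lv * du_letter x z)"
  by (cases x rule: letter_cases) (simp_all add: lbr_op_def du_letter_def mono_def mult.assoc cs_minus_one)

lemma wbr_lu: "wbr q [lu] = gen_el lu * dv_word q 1"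
  by (simp add: wbr_def wbr_op_right_letter lbr_op_lu der_word_op_lmult dv_word_def)
lemma wbr_lv: "wbr q [lv] = - (gen_el lv * du_word q 1)"
proof -
  have "wbr q [lv] = der_word_op (\<lambda>x z. gen_el lv * (- du_letter x z)) q 1"
    by (simp add: wbr_def wbr_op_right_letter lbr_op_lv)
  also have "\<dots> = gen_el lv * der_word_op (\<lambda>x z. - du_letter x z) q 1" by (rule der_word_op_lmult)
  also have "der_word_op (\<lambda>x z. - du_letter x z) q 1 = - du_word q 1"
    by (simp add: der_word_op_def du_word_def sum_negf)
  finally show ?thesis by simp
qed

lemma brK_lu: "brK y (gen_el lu) = gen_el lu * phi_v y"
proof (rule A_linear_eqI[where F = "\<lambda>y. brK y (gen_el lu)"])
  show "brK (mono w) (gen_el lu) = gen_el lu * phi_v (mono w)" for w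
    using brK_mono[of w "[lu]"] by (simp add: wbr_lu phi_v_mono)
qed (simp_all add: brK_add_left brK_cs_left phi_v_def lin_word_add lin_word_cs distrib_left cs_mult_right)

lemma brK_lv: "brK y (gen_el lv) = - (gen_el lv * phi_u y)"
proof (rule A_linear_eqI[where F = "\<lambda>y. brK y (gen_el lv)"])
  show "brK (mono w) (gen_el lv) = - (gen_el lv * phi_u (mono w))" for w
    using brK_mono[of w "[lv]"] by (simp add: wbr_lv phi_u_mono)
qed (simp_all add: brK_add_left brK_cs_left phi_u_def lin_word_add lin_word_cs distrib_left cs_mult_right cs_minus)

section \<open>Reduction of the Jacobi identity to generators\<close>

lemma derivation_eq_zeroI:
  assumes add: "\<And>x y. D (x + y) = D x + D y" and hom: "\<And>c x. D (cs c x) = cs c (D x)"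
    and der: "\<And>x y. D (x * y) = D x * y + x * D y"
    and "D (gen_el lu) = 0" "D (gen_el lv) = 0"
  shows "D a = 0"
proof -
  have one: "D 1 = 0" using der[of 1 1] by simp
  have inv: "D (gen_el (L g True)) = 0" if "D (gen_el (L g False)) = 0" for g
  proof -
    have "gen_el (L g False) * D (gen_el (L g True)) = 0"
      using der[of "gen_el (L g False)" "gen_el (L g True)"] that one by simp
    then have "gen_el (L g True) * (gen_el (L g False) * D (gen_el (L g True))) = 0" by simp
    then show ?thesis by simp
  qed
  have gen: "D (gen_el x) = 0" for x
    using assms(4,5) inv by (cases x rule: letter_cases) auto
  have mono: "D (mono w) = 0" for w
    by (induction w) (simp_all add: one mono_Cons der gen)
  show ?thesis
    by (rule A_linear_eqI[where F = D and G = "\<lambda>a. 0", simplified]) (simp_all add: add hom mono)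
qed

definition jacobiator :: "A \<Rightarrow> A \<Rightarrow> A \<Rightarrow> A" where
  "jacobiator a b c = brK a (brK b c) - brK b (brK a c) - brK (brK a b) c"

lemma jacobiator_mult: "jacobiator a b (x * y) = jacobiator a b x * y + x * jacobiator a b y"
  by (simp add: jacobiator_def brK_mult_right brK_add_right algebra_simps)

lemma jacobiator_add1: "jacobiator (a + a') b x = jacobiator a b x + jacobiator a' b x"
  by (simp add: jacobiator_def brK_add_right brK_add_left algebra_simps)
lemma jacobiator_add2: "jacobiator a (b + b') x = jacobiator a b x + jacobiator a b' x"
  by (simp add: jacobiator_def brK_add_right brK_add_left algebra_simps)
lemma jacobiator_add3: "jacobiator a b (x + y) = jacobiator a b x + jacobiator a b y"
  by (simp add: jacobiator_def brK_add_right brK_add_left algebra_simps)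
lemma jacobiator_cs1: "jacobiator (cs c a) b x = cs c (jacobiator a b x)"
  by (simp add: jacobiator_def brK_cs_right brK_cs_left cs_diff)
lemma jacobiator_cs2: "jacobiator a (cs c b) x = cs c (jacobiator a b x)"
  by (simp add: jacobiator_def brK_cs_right brK_cs_left cs_diff)
lemma jacobiator_cs3: "jacobiator a b (cs c x) = cs c (jacobiator a b x)"
  by (simp add: jacobiator_def brK_cs_right cs_diff)

lemma jacobiator_eq_zeroI:
  assumes "\<And>p q. jacobiator (mono p) (mono q) (gen_el lu) = 0" "\<And>p q. jacobiator (mono p) (mono q) (gen_el lv) = 0"
  shows "jacobiator a b x = 0"
proof -
  have mono2: "jacobiator (mono p) (mono q) x = 0" for p q
    by (rule derivation_eq_zeroI) (simp_all add: jacobiator_add3 jacobiator_cs3 jacobiator_mult assms)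
  have mono1: "jacobiator (mono p) b x = 0" for p
    by (rule A_linear_eqI[where F = "\<lambda>b. jacobiator (mono p) b x" and G = "\<lambda>b. 0", simplified])
       (simp_all add: jacobiator_add2 jacobiator_cs2 mono2)
  show ?thesis
    by (rule A_linear_eqI[where F = "\<lambda>a. jacobiator a b x" and G = "\<lambda>a. 0", simplified])
       (simp_all add: jacobiator_add1 jacobiator_cs1 mono1)
qed

section \<open>The Jacobiator at the generator u\<close>

definition jac_u :: "A \<Rightarrow> A \<Rightarrow> A" where
  "jac_u P Q = phi_v P * phi_v Q - phi_v Q * phi_v P + brK P (phi_v Q) - brK Q (phi_v P) - phi_v (brK P Q)"

lemma jacobiator_gen_lu: "jacobiator P Q (gen_el lu) = gen_el lu * jac_u P Q"
  by (simp add: jacobiator_def jac_u_def brK_lu brK_mult_right algebra_simps)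

definition wbr_op_lin :: "letter list \<Rightarrow> A \<Rightarrow> A \<Rightarrow> A" where
  "wbr_op_lin q y m = lin_word (\<lambda>w. wbr_op q w m) y"

lemma wbr_op_lin_mono: "wbr_op_lin q (mono w) m = wbr_op q w m"
  by (simp add: wbr_op_lin_def lin_word_mono wbr_op_reduce_right)
lemma wbr_op_lin_add_left: "wbr_op_lin q (a + b) m = wbr_op_lin q a m + wbr_op_lin q b m"
  by (simp add: wbr_op_lin_def lin_word_add)
lemma wbr_op_lin_cs_left: "wbr_op_lin q (cs c a) m = cs c (wbr_op_lin q a m)"
  by (simp add: wbr_op_lin_def lin_word_cs)
lemma wbr_op_lin_minus_left: "wbr_op_lin q (- y) m = - wbr_op_lin q y m"
  using wbr_op_lin_cs_left[of q "-1" y m] by (simp add: cs_minus_one)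
lemma wbr_op_lin_zero_left[simp]: "wbr_op_lin q 0 z = 0" by (simp add: wbr_op_lin_def)
lemma wbr_op_lin_sum: "wbr_op_lin q (sum f S) z = (\<Sum>x\<in>S. wbr_op_lin q (f x) z)"
  by (induction S rule: infinite_finite_induct) (auto simp: wbr_op_lin_add_left)
lemma wbr_op_lin_cyc_sum: "wbr_op_lin q (cyc_sum H p) z = cyc_sum (\<lambda>r. wbr_op_lin q (H r) z) p"
  by (simp add: cyc_sum_def wbr_op_lin_sum)
lemma wbr_op_lin_append: "wbr_op_lin (q1 @ q2) y m = wbr_op_lin q1 y (mono q2 * m) + wbr_op_lin q2 y (m * mono q1)"
  by (simp add: wbr_op_lin_def wbr_op_append_left lin_word_fun_add)
lemma wbr_op_lin_one: "wbr_op_lin q y 1 = brK (mono q) y"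
  by (simp add: wbr_op_lin_def brK_eq_lin_ext lin_ext_mono lin_word_def wbr_def[symmetric] wbr_reduce_left
      word_Abs_reduce)
lemma wbr_op_lin_Nil[simp]: "wbr_op_lin [] y m = 0" by (simp add: wbr_op_lin_def wbr_op_def)

definition jac_u_op :: "letter list \<Rightarrow> letter list \<Rightarrow> A \<Rightarrow> A" where
  "jac_u_op p q m = phi_v (mono p) * dv_word q m - dv_word q m * phi_v (mono p) + brK (mono p) (dv_word q m)
     - dv_word q (brK (mono p) m) - wbr_op_lin q (phi_v (mono p)) m - dv_lin (brK (mono p) (mono q)) m"

lemma jac_u_op_one: "jac_u_op p q 1 = jac_u (mono p) (mono q)"
  by (simp add: jac_u_op_def jac_u_def phi_v_mono[symmetric] brK_one wbr_op_lin_one dv_lin_one)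

lemma jac_u_op_Nil: "jac_u_op p [] m = 0"
  by (simp add: jac_u_op_def brK_one dv_word_def)

lemma jac_u_op_append: "jac_u_op p (q1 @ q2) m = jac_u_op p q1 (mono q2 * m) + jac_u_op p q2 (m * mono q1)"
proof -
  let ?P = "mono p" and ?Q1 = "mono q1" and ?Q2 = "mono q2"
  have "brK ?P (mono (q1 @ q2)) = brK ?P ?Q1 * ?Q2 + ?Q1 * brK ?P ?Q2"
    by (simp add: mono_append brK_mult_right)
  then have "dv_lin (brK ?P (mono (q1 @ q2))) m = dv_lin (brK ?P ?Q1) (?Q2 * m) + dv_word q2 (m * brK ?P ?Q1)
            + dv_word q1 (brK ?P ?Q2 * m) + dv_lin (brK ?P ?Q2) (m * ?Q1)"
    by (simp add: dv_lin_add_left dv_lin_mult dv_lin_mono)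
  then show ?thesis
    by (simp add: jac_u_op_def dv_word_append wbr_op_lin_append brK_add_right brK_mult_right dv_word_add
        algebra_simps)
qed

lemma jac_u_op_inv_pair: "jac_u_op p [x, inv_l x] m = 0"
proof -
  have reduce: "reduce [x, inv_l x] = []" by (simp add: reduce_def)
  have "dv_word [x, inv_l x] z = 0" for z
    using dv_word_reduce[of "[x, inv_l x]" z] by (simp add: reduce dv_word_def)
  moreover have "wbr_op_lin [x, inv_l x] y z = 0" for y z
    using wbr_op_reduce_left[of "[x, inv_l x]"] by (simp add: wbr_op_lin_def reduce wbr_op_def)
  moreover have "mono [x, inv_l x] = 1" by (simp add: mono_def gen_el_mult_inv)
  ultimately show ?thesis by (simp add: jac_u_op_def brK_one)
qed

lemma jac_u_op_eq_prim_diff: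
  assumes u: "\<And>z. jac_u_op p [lu] z = E (z * gen_el lu) - E (gen_el lu * z)"
      and v: "\<And>z. jac_u_op p [lv] z = E (z * gen_el lv) - E (gen_el lv * z)"
  shows "jac_u_op p q z = E (z * mono q) - E (mono q * z)"
proof -
  have pos: "jac_u_op p [L g False] z = E (z * gen_el (L g False)) - E (gen_el (L g False) * z)" for g z
    using u v by (cases g) auto
  have neg: "jac_u_op p [L g True] z = E (z * gen_el (L g True)) - E (gen_el (L g True) * z)" for g z
  proof -
    let ?x = "L g False" and ?y = "L g True"
    have "jac_u_op p [?x] (gen_el ?y * (z * gen_el ?y)) + jac_u_op p [?y] (z * gen_el ?y * gen_el ?x) = 0"
      using jac_u_op_inv_pair[of p ?x "z * gen_el ?y"] jac_u_op_append[of p "[?x]" "[?y]"] by simp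
    then have "jac_u_op p [?y] z = - jac_u_op p [?x] (gen_el ?y * (z * gen_el ?y))"
      by (simp add: mult.assoc eq_neg_iff_add_eq_0 add.commute)
    also have "\<dots> = E (z * gen_el ?y) - E (gen_el ?y * z)"
      by (simp add: pos mult.assoc)
    finally show ?thesis .
  qed
  have letter: "jac_u_op p [x] z = E (z * gen_el x) - E (gen_el x * z)" for x z
    by (cases x rule: letter_cases) (simp_all add: pos neg)
  show ?thesis
  proof (induction q arbitrary: z)
    case Nil then show ?case by (simp add: jac_u_op_Nil)
  next
    case (Cons x q)
    have "jac_u_op p (x # q) z = jac_u_op p [x] (mono q * z) + jac_u_op p q (z * gen_el x)"
      using jac_u_op_append[of p "[x]" q z] by simp
    also have "\<dots> = E (z * mono (x # q)) - E (mono (x # q) * z)"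
      by (simp add: letter Cons mono_Cons mult.assoc)
    finally show ?case .
  qed
qed

lemma jac_u_op_lu: "jac_u_op p [lu] z = - wbr_op_lin [lu] (phi_v (mono p)) z - dv_lin (phi_v (mono p)) (z * gen_el lu)"
proof -
  have d0: "dv_word [lu] m = 0" for m by (simp add: dv_word_def dv_letter_def)
  have "dv_lin (gen_el lu * phi_v (mono p)) z = dv_lin (phi_v (mono p)) (z * gen_el lu)"
    using dv_lin_mult[of "gen_el lu" "phi_v (mono p)" z] dv_lin_mono[of "[lu]"] by (simp add: d0)
  then show ?thesis
    by (simp add: jac_u_op_def d0 brK_lu)
qed

lemma jac_u_op_lv: "jac_u_op p [lv] z = phi_v (mono p) * (gen_el lv * z) - (gen_el lv * z) * phi_v (mono p)
    - wbr_op_lin [lv] (phi_v (mono p)) z + dv_lin (phi_u (mono p)) (z * gen_el lv)"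
proof -
  let ?P = "mono p"
  have d0: "dv_word [lv] m = gen_el lv * m" for m by (simp add: dv_word_def dv_letter_def)
  have "dv_lin (gen_el lv * phi_u ?P) z = dv_word [lv] (phi_u ?P * z) + dv_lin (phi_u ?P) (z * gen_el lv)"
    using dv_lin_mult[of "gen_el lv" "phi_u ?P" z] dv_lin_mono[of "[lv]"] by simp
  then have "dv_lin (- (gen_el lv * phi_u ?P)) z = - (gen_el lv * phi_u ?P * z) - dv_lin (phi_u ?P) (z * gen_el lv)"
    by (simp add: dv_lin_minus_left d0 mult.assoc)
  moreover have "brK ?P (gen_el lv * z) - gen_el lv * brK ?P z = - (gen_el lv * phi_u ?P) * z"
    by (simp add: brK_mult_right brK_lv)
  ultimately show ?thesis
    by (simp add: jac_u_op_def d0 brK_lv algebra_simps)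
qed

definition dv_rot_sum :: "(letter list \<Rightarrow> A) \<Rightarrow> letter list \<Rightarrow> A \<Rightarrow> A" where
  "dv_rot_sum F r m =
     (\<Sum>t<length r. F (rotate (Suc t) r) * dv_letter (hd r) (mono (take t (tl r)) * m * mono (drop t (tl r))))"

lemma cyc_sum_mult_dv_word: "cyc_sum (\<lambda>r. F r * dv_word r m) p = cyc_sum (\<lambda>r. dv_rot_sum F r m) p"
proof -
  let ?n = "length p"
  define G where "G c k = F (rotate c p)
      * dv_letter (rotate c p ! k) (mono (drop (Suc k) (rotate c p)) * m * mono (take k (rotate c p)))" for c k
  define H where "H j t = F (rotate (Suc t) (rotate j p))
      * dv_letter (hd (rotate j p)) (mono (take t (tl (rotate j p))) * m * mono (drop t (tl (rotate j p))))" for j t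
  have GH: "G ((j + t + 1) mod ?n) (?n - 1 - t) = H j t" if j: "j < ?n" and t: "t < ?n" for j t
  proof -
    define w where "w = drop (Suc j) p @ take j p"
    have rj: "rotate j p = p ! j # w" using j by (simp add: rotate_nth_cons w_def)
    have lw: "length w = ?n - 1" using j by (simp add: w_def)
    have rot: "rotate (Suc t) (rotate j p) = drop t w @ p ! j # take t w"
      using rj lw t by (simp add: rotate_Suc_cons)
    have rc: "rotate ((j + t + 1) mod ?n) p = drop t w @ p ! j # take t w"
      using rot by (simp add: rotate_conv_mod[symmetric] rotate_rotate add.commute)
    have k: "?n - 1 - t = length (drop t w)" using lw t by simp
    show ?thesis
      unfolding G_def H_def rc k rot by (simp add: nth_append rj)
  qed
  have "cyc_sum (\<lambda>r. F r * dv_word r m) p = (\<Sum>c<?n. \<Sum>k<?n. G c k)"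
    by (simp add: cyc_sum_def G_def dv_word_def der_word_op_def sum_distrib_left)
  also have "\<dots> = (\<Sum>j<?n. \<Sum>t<?n. G ((j + t + 1) mod ?n) (?n - 1 - t))"
    by (rule sum_sum_rotate_reindex)
  also have "\<dots> = (\<Sum>j<?n. \<Sum>t<?n. H j t)"
    by (intro sum.cong refl GH) auto
  also have "\<dots> = cyc_sum (\<lambda>r. dv_rot_sum F r m) p"
    by (simp add: cyc_sum_def dv_rot_sum_def H_def)
  finally show ?thesis .
qed

text \<open>For a rotation \<open>r = x # w\<close>, \<open>rotate (Suc t) r = drop t w @ x # take t w\<close>; \<open>head_at x w t\<close> and
  \<open>last_at x w t\<close> are its first and last letter. The parameter \<open>e\<close> replaces \<open>x\<close> as the last letter for
  \<open>t = 0\<close>, which is what makes induction on \<open>w\<close> possible.\<close>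

definition head_at :: "letter \<Rightarrow> letter list \<Rightarrow> nat \<Rightarrow> letter" where
  "head_at x w t = (if t < length w then w ! t else x)"
definition last_at :: "letter \<Rightarrow> letter list \<Rightarrow> nat \<Rightarrow> letter" where
  "last_at e w t = (if t = 0 then e else w ! (t - 1))"

definition ins_sum :: "(letter \<Rightarrow> letter \<Rightarrow> int) \<Rightarrow> letter \<Rightarrow> letter \<Rightarrow> letter list \<Rightarrow> A \<Rightarrow> A" where
  "ins_sum f x e w m = (\<Sum>t<Suc (length w).
     of_int (f (head_at x w t) (last_at e w t)) * dv_letter x (mono (take t w) * m * mono (drop t w)))"

lemma dv_rot_sum_eq_ins_sum: "dv_rot_sum (\<lambda>r. of_int (f (hd r) (last r))) (x # w) m = ins_sum f x x w m"
  unfolding dv_rot_sum_def ins_sum_def length_Cons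
proof (rule sum.cong[OF refl])
  fix t assume "t \<in> {..<Suc (length w)}"
  then have t: "t \<le> length w" by simp
  have r: "rotate (Suc t) (x # w) = drop t w @ x # take t w" using t by (rule rotate_Suc_cons)
  have h: "hd (drop t w @ x # take t w) = head_at x w t"
    using t by (auto simp: head_at_def hd_append hd_drop_conv_nth)
  have l: "last (drop t w @ x # take t w) = last_at x w t"
    using t by (auto simp: last_at_def last_append last_conv_nth min_def)
  show "of_int (f (hd (rotate (Suc t) (x # w))) (last (rotate (Suc t) (x # w)))) *
        dv_letter (hd (x # w)) (mono (take t (tl (x # w))) * m * mono (drop t (tl (x # w)))) =
        of_int (f (head_at x w t) (last_at x w t)) * dv_letter x (mono (take t w) * m * mono (drop t w))"
    by (simp add: r h l)
qed

lemma ins_sum_split_last: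
  "ins_sum f x e w m =
     (\<Sum>t<length w. of_int (f (head_at x w t) (last_at e w t)) * dv_letter x (mono (take t w) * m * mono (drop t w)))
      + of_int (f x (last_at e w (length w))) * dv_letter x (mono w * m)"
  unfolding ins_sum_def by (simp add: head_at_def)

lemma ins_sum_snoc:
  "ins_sum f x e (w @ [y]) m =
     (\<Sum>t<length w. of_int (f (head_at x w t) (last_at e w t))
        * dv_letter x (mono (take t w) * m * mono (drop t w) * gen_el y))
     + of_int (f y (last_at e w (length w))) * dv_letter x (mono w * m * gen_el y)
     + of_int (f x y) * dv_letter x (mono w * gen_el y * m)"
proof -
  have "(\<Sum>t<length w. of_int (f (head_at x (w @ [y]) t) (last_at e (w @ [y]) t))
          * dv_letter x (mono (take t (w @ [y])) * m * mono (drop t (w @ [y]))))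
      = (\<Sum>t<length w. of_int (f (head_at x w t) (last_at e w t))
          * dv_letter x (mono (take t w) * m * mono (drop t w) * gen_el y))"
    by (rule sum.cong) (auto simp: head_at_def last_at_def nth_append mono_append mult.assoc)
  then show ?thesis
    unfolding ins_sum_def by (simp add: head_at_def last_at_def nth_append mono_append mult.assoc)
qed

lemma ins_sum_cons:
  "ins_sum f x e (y # w) m = of_int (f y e) * dv_letter x (m * mono (y # w))
     + (\<Sum>s<Suc (length w). of_int (f (head_at x w s) (last_at y w s))
          * dv_letter x (gen_el y * mono (take s w) * m * mono (drop s w)))"
proof -
  have "(\<Sum>s<Suc (length w). of_int (f (head_at x (y # w) (Suc s)) (last_at e (y # w) (Suc s)))
          * dv_letter x (mono (take (Suc s) (y # w)) * m * mono (drop (Suc s) (y # w))))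
      = (\<Sum>s<Suc (length w). of_int (f (head_at x w s) (last_at y w s))
          * dv_letter x (gen_el y * mono (take s w) * m * mono (drop s w)))"
    by (rule sum.cong) (auto simp: head_at_def last_at_def mono_Cons nth_Cons' mult.assoc)
  moreover have "ins_sum f x e (y # w) m
      = of_int (f (head_at x (y # w) 0) (last_at e (y # w) 0)) * dv_letter x (m * mono (y # w))
      + (\<Sum>s<Suc (length w). of_int (f (head_at x (y # w) (Suc s)) (last_at e (y # w) (Suc s)))
          * dv_letter x (mono (take (Suc s) (y # w)) * m * mono (drop (Suc s) (y # w))))"
    unfolding ins_sum_def by (simp only: length_Cons sum.lessThan_Suc_shift) simp
  ultimately show ?thesis by (simp add: head_at_def last_at_def)
qed

lemma ins_sum_change_last:
  "ins_sum f x e w m = ins_sum f x x w m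
     + (of_int (f (head_at x w 0) e) - of_int (f (head_at x w 0) x)) * dv_letter x (m * mono w)"
  unfolding ins_sum_def by (simp only: sum.lessThan_Suc_shift) (simp add: last_at_def algebra_simps)

lemma ins_sum_zero: "x \<noteq> lv \<Longrightarrow> x \<noteq> lV \<Longrightarrow> ins_sum f x e w m = 0"
  by (simp add: ins_sum_def dv_letter_other)

lemma mult_of_int_left_commute: "(a::A) * (of_int c * b) = of_int c * (a * b)"
  by (metis mult.assoc mult_of_int_commute)

definition ins_step_snoc :: "(letter \<Rightarrow> letter \<Rightarrow> int) \<Rightarrow> letter \<Rightarrow> letter \<Rightarrow> A \<Rightarrow> A \<Rightarrow> A" where
  "ins_step_snoc f l y W m = - (of_int (f lv l) * (gen_el lv * (W * m))) * gen_el y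
      + of_int (f y l) * (gen_el lv * (W * m * gen_el y))
      + of_int (f lv y) * (gen_el lv * (W * gen_el y * m))"

definition ins_step_cons :: "(letter \<Rightarrow> letter \<Rightarrow> int) \<Rightarrow> letter \<Rightarrow> letter \<Rightarrow> A \<Rightarrow> A \<Rightarrow> A" where
  "ins_step_cons f h y W m = of_int (f y lV) * (- (m * (gen_el y * W) * gen_el lV))
      + gen_el y * ((of_int (f h y) - of_int (f h lV)) * (- (m * W * gen_el lV)))"

lemma ins_sum_snoc_lv:
  "ins_sum f lv e (w @ [y]) m = ins_sum f lv e w m * gen_el y + ins_step_snoc f (last_at e w (length w)) y (mono w) m"
  by (simp add: ins_sum_snoc ins_sum_split_last[of f lv e w m] dv_letter_lv ins_step_snoc_def sum_distrib_right
      algebra_simps)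

lemma ins_sum_cons_lV:
  "ins_sum f lV lV (y # w) m = gen_el y * ins_sum f lV lV w m + ins_step_cons f (head_at lV w 0) y (mono w) m"
proof -
  have "(\<Sum>s<Suc (length w). of_int (f (head_at lV w s) (last_at y w s))
          * dv_letter lV (gen_el y * mono (take s w) * m * mono (drop s w)))
      = gen_el y * ins_sum f lV y w m"
    by (simp add: ins_sum_def dv_letter_lV sum_distrib_left algebra_simps mult_of_int_left_commute)
  then show ?thesis
    by (simp add: ins_sum_cons ins_sum_change_last[of f lV y w m] dv_letter_lV ins_step_cons_def mono_Cons
        algebra_simps)
qed

definition wt_phi_v :: "letter \<Rightarrow> letter \<Rightarrow> int" where
  "wt_phi_v h l = of_bool (h = lv) - of_bool (l = lV)"
definition wt_phi_u :: "letter \<Rightarrow> letter \<Rightarrow> int" where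
  "wt_phi_u h l = of_bool (h = lu) - of_bool (l = lU)"
definition wt_prim :: "letter \<Rightarrow> letter \<Rightarrow> int" where
  "wt_prim h l = of_bool (h = lu \<or> h = lV) - of_bool (l = lv \<or> l = lU)"

lemma wbr_op_letter_cons: "wbr_op [q] (y # r) z = lbr_op q y z * mono r + gen_el y * wbr_op [q] r z"
  by (simp add: wbr_op_left_letter der_word_Cons)

lemma wbr_op_letter_snoc: "wbr_op [q] (r @ [y]) z = wbr_op [q] r z * gen_el y + mono r * lbr_op q y z"
  by (simp add: wbr_op_left_letter der_word_append)

lemma step_u_lv:
  "- (gen_el lv * W * lbr_op lu y z) - ins_step_snoc wt_phi_v l y W (z * gen_el lu)
     - ins_step_snoc wt_prim l y W (z * gen_el lu) + ins_step_snoc wt_prim l y W (gen_el lu * z) = 0"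
  unfolding ins_step_snoc_def
  by (cases y rule: letter_cases; cases l rule: letter_cases)
     (simp_all add: lbr_op_def mono_def wt_phi_v_def wt_prim_def algebra_simps cs_minus_one)

lemma ins_identity_u_lv:
  "- wbr_op [lu] (lv # w) z - ins_sum wt_phi_v lv lv w (z * gen_el lu)
     - ins_sum wt_prim lv lv w (z * gen_el lu) + ins_sum wt_prim lv lv w (gen_el lu * z) = 0"
  (is "?D w z = 0")
proof (induction w arbitrary: z rule: rev_induct)
  case Nil
  show ?case
    by (simp add: ins_sum_def wbr_op_def lbr_op_def mono_def head_at_def last_at_def wt_phi_v_def wt_prim_def
        dv_letter_lv algebra_simps cs_minus_one)
next
  case (snoc y w)
  let ?l = "last_at lv w (length w)" and ?W = "mono w"
  have "wbr_op [lu] (lv # w @ [y]) z = wbr_op [lu] (lv # w) z * gen_el y + gen_el lv * ?W * lbr_op lu y z"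
    using wbr_op_letter_snoc[of lu "lv # w" y z] by (simp add: mono_Cons)
  then have "?D (w @ [y]) z = ?D w z * gen_el y
      + (- (gen_el lv * ?W * lbr_op lu y z) - ins_step_snoc wt_phi_v ?l y ?W (z * gen_el lu)
         - ins_step_snoc wt_prim ?l y ?W (z * gen_el lu) + ins_step_snoc wt_prim ?l y ?W (gen_el lu * z))"
    by (simp add: ins_sum_snoc_lv algebra_simps)
  also have "\<dots> = 0" using snoc.IH step_u_lv by simp
  finally show ?case .
qed

lemma step_u_lV:
  "lbr_op lu y z * (W * gen_el lV) - ins_step_cons wt_phi_v h y W (z * gen_el lu)
     - ins_step_cons wt_prim h y W (z * gen_el lu) + ins_step_cons wt_prim h y W (gen_el lu * z) = 0"
  unfolding ins_step_cons_def
  by (cases y rule: letter_cases; cases h rule: letter_cases)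
     (simp_all add: lbr_op_def mono_def wt_phi_v_def wt_prim_def algebra_simps cs_minus_one)

lemma ins_identity_u_lV:
  "wbr_op [lu] (w @ [lV]) z - ins_sum wt_phi_v lV lV w (z * gen_el lu)
     - ins_sum wt_prim lV lV w (z * gen_el lu) + ins_sum wt_prim lV lV w (gen_el lu * z) = 0"
  (is "?D w z = 0")
proof (induction w arbitrary: z)
  case Nil
  show ?case
    by (simp add: ins_sum_def wbr_op_def lbr_op_def mono_def head_at_def last_at_def wt_phi_v_def wt_prim_def
        dv_letter_lV algebra_simps cs_minus_one)
next
  case (Cons y w)
  let ?h = "head_at lV w 0" and ?W = "mono w"
  have "wbr_op [lu] ((y # w) @ [lV]) z = lbr_op lu y z * (?W * gen_el lV) + gen_el y * wbr_op [lu] (w @ [lV]) z"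
    using wbr_op_letter_cons[of lu y "w @ [lV]" z] by (simp add: mono_snoc)
  then have "?D (y # w) z = gen_el y * ?D w z
      + (lbr_op lu y z * (?W * gen_el lV) - ins_step_cons wt_phi_v ?h y ?W (z * gen_el lu)
         - ins_step_cons wt_prim ?h y ?W (z * gen_el lu) + ins_step_cons wt_prim ?h y ?W (gen_el lu * z))"
    by (simp add: ins_sum_cons_lV algebra_simps)
  also have "\<dots> = 0" using Cons.IH step_u_lV by simp
  finally show ?case .
qed

lemma wbr_op_lin_dv_letter_lv: "wbr_op_lin q (dv_letter lv (mono w)) z = wbr_op q (lv # w) z"
  by (simp add: dv_letter_lv mono_Cons[symmetric] wbr_op_lin_mono)

lemma wbr_op_lin_dv_letter_lV: "wbr_op_lin q (dv_letter lV (mono w)) z = - wbr_op q (w @ [lV]) z"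
  by (simp add: dv_letter_lV mono_snoc[symmetric] wbr_op_lin_mono wbr_op_lin_minus_left)

lemma ins_identity_u:
  "- wbr_op_lin [lu] (dv_letter x (mono w)) z - ins_sum wt_phi_v x x w (z * gen_el lu)
     - ins_sum wt_prim x x w (z * gen_el lu) + ins_sum wt_prim x x w (gen_el lu * z) = 0"
  using ins_identity_u_lv[of w z] ins_identity_u_lV[of w z]
  by (cases x rule: letter_cases)
     (simp_all add: wbr_op_lin_dv_letter_lv wbr_op_lin_dv_letter_lV dv_letter_other ins_sum_zero)

lemma step_v_lv:
  "gen_el lv * W * gen_el y * (gen_el lv * z) - gen_el lv * W * (gen_el lv * z) * gen_el y
     - gen_el lv * W * lbr_op lv y z + ins_step_snoc wt_phi_u l y W (z * gen_el lv)
     - ins_step_snoc wt_prim l y W (z * gen_el lv) + ins_step_snoc wt_prim l y W (gen_el lv * z) = 0"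
  unfolding ins_step_snoc_def
  by (cases y rule: letter_cases; cases l rule: letter_cases)
     (simp_all add: lbr_op_def mono_def wt_phi_u_def wt_prim_def algebra_simps cs_minus_one)

lemma ins_identity_v_lv:
  "gen_el lv * mono w * (gen_el lv * z) - (gen_el lv * z) * (gen_el lv * mono w) - wbr_op [lv] (lv # w) z
     + ins_sum wt_phi_u lv lv w (z * gen_el lv) - ins_sum wt_prim lv lv w (z * gen_el lv)
     + ins_sum wt_prim lv lv w (gen_el lv * z) = 0"
  (is "?D w z = 0")
proof (induction w arbitrary: z rule: rev_induct)
  case Nil
  show ?case
    by (simp add: ins_sum_def wbr_op_def lbr_op_def mono_def head_at_def last_at_def wt_phi_u_def wt_prim_def
        dv_letter_lv algebra_simps cs_minus_one)
next
  case (snoc y w)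
  let ?l = "last_at lv w (length w)" and ?W = "mono w"
  have "wbr_op [lv] (lv # w @ [y]) z = wbr_op [lv] (lv # w) z * gen_el y + gen_el lv * ?W * lbr_op lv y z"
    using wbr_op_letter_snoc[of lv "lv # w" y z] by (simp add: mono_Cons)
  then have "?D (w @ [y]) z = ?D w z * gen_el y
      + (gen_el lv * ?W * gen_el y * (gen_el lv * z) - gen_el lv * ?W * (gen_el lv * z) * gen_el y
         - gen_el lv * ?W * lbr_op lv y z + ins_step_snoc wt_phi_u ?l y ?W (z * gen_el lv)
         - ins_step_snoc wt_prim ?l y ?W (z * gen_el lv) + ins_step_snoc wt_prim ?l y ?W (gen_el lv * z))"
    by (simp add: ins_sum_snoc_lv mono_snoc algebra_simps)
  also have "\<dots> = 0" using snoc.IH step_v_lv by simp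
  finally show ?case .
qed

lemma step_v_lV:
  "gen_el lv * z * (gen_el y * W * gen_el lV) - gen_el y * (gen_el lv * z * (W * gen_el lV))
     + lbr_op lv y z * (W * gen_el lV) + ins_step_cons wt_phi_u h y W (z * gen_el lv)
     - ins_step_cons wt_prim h y W (z * gen_el lv) + ins_step_cons wt_prim h y W (gen_el lv * z) = 0"
  unfolding ins_step_cons_def
  by (cases y rule: letter_cases; cases h rule: letter_cases)
     (simp_all add: lbr_op_def mono_def wt_phi_u_def wt_prim_def algebra_simps cs_minus_one)

lemma ins_identity_v_lV:
  "- (mono w * gen_el lV) * (gen_el lv * z) + (gen_el lv * z) * (mono w * gen_el lV) + wbr_op [lv] (w @ [lV]) z
     + ins_sum wt_phi_u lV lV w (z * gen_el lv) - ins_sum wt_prim lV lV w (z * gen_el lv)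
     + ins_sum wt_prim lV lV w (gen_el lv * z) = 0"
  (is "?D w z = 0")
proof (induction w arbitrary: z)
  case Nil
  show ?case
    by (simp add: ins_sum_def wbr_op_def lbr_op_def mono_def head_at_def last_at_def wt_phi_u_def wt_prim_def
        dv_letter_lV algebra_simps cs_minus_one)
next
  case (Cons y w)
  let ?h = "head_at lV w 0" and ?W = "mono w"
  have "wbr_op [lv] ((y # w) @ [lV]) z = lbr_op lv y z * (?W * gen_el lV) + gen_el y * wbr_op [lv] (w @ [lV]) z"
    using wbr_op_letter_cons[of lv y "w @ [lV]" z] by (simp add: mono_snoc)
  then have "?D (y # w) z = gen_el y * ?D w z
      + (gen_el lv * z * (gen_el y * ?W * gen_el lV) - gen_el y * (gen_el lv * z * (?W * gen_el lV))
         + lbr_op lv y z * (?W * gen_el lV) + ins_step_cons wt_phi_u ?h y ?W (z * gen_el lv)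
         - ins_step_cons wt_prim ?h y ?W (z * gen_el lv) + ins_step_cons wt_prim ?h y ?W (gen_el lv * z))"
    by (simp add: ins_sum_cons_lV mono_Cons algebra_simps)
  also have "\<dots> = 0" using Cons.IH step_v_lV by simp
  finally show ?case .
qed

lemma ins_identity_v:
  "dv_letter x (mono w) * (gen_el lv * z) - (gen_el lv * z) * dv_letter x (mono w)
     - wbr_op_lin [lv] (dv_letter x (mono w)) z + ins_sum wt_phi_u x x w (z * gen_el lv)
     - ins_sum wt_prim x x w (z * gen_el lv) + ins_sum wt_prim x x w (gen_el lv * z) = 0"
proof (cases x rule: letter_cases)
  case v
  show ?thesis
    using ins_identity_v_lv[of w z] unfolding v
    by (simp only: wbr_op_lin_dv_letter_lv) (simp add: dv_letter_lv mult.assoc)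
next
  case V
  show ?thesis
    using ins_identity_v_lV[of w z] unfolding V by (simp only: wbr_op_lin_dv_letter_lV) (simp add: dv_letter_lV)
qed (simp_all add: dv_letter_other ins_sum_zero)

lemma cyc_sum_dv_word_eq_ins_sum:
  "cyc_sum (\<lambda>r. of_int (f (hd r) (last r)) * dv_word r m) p = cyc_sum (\<lambda>r. ins_sum f (hd r) (hd r) (tl r) m) p"
  unfolding cyc_sum_mult_dv_word by (rule cyc_sum_cong) (auto simp: neq_Nil_conv dv_rot_sum_eq_ins_sum)

lemma dv_lin_phi_v: "dv_lin (phi_v (mono p)) m = cyc_sum (\<lambda>r. ins_sum wt_phi_v (hd r) (hd r) (tl r) m) p"
proof -
  have "dv_lin (phi_v (mono p)) m
      = cyc_sum (\<lambda>r. of_bool (hd r = lv) * dv_word r m - of_bool (hd r = lV) * dv_word (rotate 1 r) m) p"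
    unfolding phi_v_eq_cyc_sum dv_lin_cyc_sum
    by (rule cyc_sum_cong) (auto simp: neq_Nil_conv dv_lin_dv_letter rotate_Suc)
  also have "\<dots> = cyc_sum (\<lambda>r. of_bool (hd r = lv) * dv_word r m) p
      - cyc_sum (\<lambda>r. of_bool (last r = lV) * dv_word r m) p"
    using cyc_sum_shift_hd[of "\<lambda>a r. of_bool (a = lV) * dv_word r m" p] by (simp add: cyc_sum_diff)
  also have "\<dots> = cyc_sum (\<lambda>r. of_int (wt_phi_v (hd r) (last r)) * dv_word r m) p"
    by (simp add: cyc_sum_diff[symmetric] wt_phi_v_def algebra_simps)
  finally show ?thesis by (simp add: cyc_sum_dv_word_eq_ins_sum)
qed

lemma dv_lin_phi_u: "dv_lin (phi_u (mono p)) m = cyc_sum (\<lambda>r. ins_sum wt_phi_u (hd r) (hd r) (tl r) m) p"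
proof -
  have "dv_lin (phi_u (mono p)) m
      = cyc_sum (\<lambda>r. of_bool (hd r = lu) * dv_word r m - of_bool (hd r = lU) * dv_word (rotate 1 r) m) p"
    unfolding phi_u_eq_cyc_sum dv_lin_cyc_sum
    by (rule cyc_sum_cong) (auto simp: neq_Nil_conv dv_lin_du_letter rotate_Suc)
  also have "\<dots> = cyc_sum (\<lambda>r. of_bool (hd r = lu) * dv_word r m) p
      - cyc_sum (\<lambda>r. of_bool (last r = lU) * dv_word r m) p"
    using cyc_sum_shift_hd[of "\<lambda>a r. of_bool (a = lU) * dv_word r m" p] by (simp add: cyc_sum_diff)
  also have "\<dots> = cyc_sum (\<lambda>r. of_int (wt_phi_u (hd r) (last r)) * dv_word r m) p"
    by (simp add: cyc_sum_diff[symmetric] wt_phi_u_def algebra_simps)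
  finally show ?thesis by (simp add: cyc_sum_dv_word_eq_ins_sum)
qed

definition jac_u_prim :: "letter list \<Rightarrow> A \<Rightarrow> A" where
  "jac_u_prim p m = cyc_sum (\<lambda>r. of_int (wt_prim (hd r) (last r)) * dv_word r m) p"

lemma jac_u_op_lu_eq: "jac_u_op p [lu] z = jac_u_prim p (z * gen_el lu) - jac_u_prim p (gen_el lu * z)"
proof -
  have "jac_u_op p [lu] z - (jac_u_prim p (z * gen_el lu) - jac_u_prim p (gen_el lu * z))
     = cyc_sum (\<lambda>r. - wbr_op_lin [lu] (dv_letter (hd r) (mono (tl r))) z
          - ins_sum wt_phi_v (hd r) (hd r) (tl r) (z * gen_el lu)
          - ins_sum wt_prim (hd r) (hd r) (tl r) (z * gen_el lu)
          + ins_sum wt_prim (hd r) (hd r) (tl r) (gen_el lu * z)) p"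
    by (simp add: jac_u_op_lu jac_u_prim_def cyc_sum_dv_word_eq_ins_sum phi_v_eq_cyc_sum wbr_op_lin_cyc_sum
        dv_lin_phi_v[unfolded phi_v_eq_cyc_sum] cyc_sum_add cyc_sum_diff cyc_sum_minus)
  also have "\<dots> = 0"
    by (rule cyc_sum_zero) (rule ins_identity_u)
  finally show ?thesis by simp
qed

lemma jac_u_op_lv_eq: "jac_u_op p [lv] z = jac_u_prim p (z * gen_el lv) - jac_u_prim p (gen_el lv * z)"
proof -
  have "jac_u_op p [lv] z - (jac_u_prim p (z * gen_el lv) - jac_u_prim p (gen_el lv * z))
     = cyc_sum (\<lambda>r. dv_letter (hd r) (mono (tl r)) * (gen_el lv * z) - (gen_el lv * z) * dv_letter (hd r) (mono (tl r))
          - wbr_op_lin [lv] (dv_letter (hd r) (mono (tl r))) z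
          + ins_sum wt_phi_u (hd r) (hd r) (tl r) (z * gen_el lv)
          - ins_sum wt_prim (hd r) (hd r) (tl r) (z * gen_el lv)
          + ins_sum wt_prim (hd r) (hd r) (tl r) (gen_el lv * z)) p"
    by (simp add: jac_u_op_lv jac_u_prim_def cyc_sum_dv_word_eq_ins_sum phi_v_eq_cyc_sum wbr_op_lin_cyc_sum
        dv_lin_phi_u cyc_sum_add cyc_sum_diff cyc_sum_minus cyc_sum_rmult cyc_sum_lmult)
  also have "\<dots> = 0"
    by (rule cyc_sum_zero) (rule ins_identity_v)
  finally show ?thesis by simp
qed

lemma jacobiator_mono_gen_lu: "jacobiator (mono p) (mono q) (gen_el lu) = 0"
proof -
  have "jac_u (mono p) (mono q) = 0"
    using jac_u_op_eq_prim_diff[of p "jac_u_prim p" q 1] by (simp add: jac_u_op_one jac_u_op_lu_eq jac_u_op_lv_eq)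
  then show ?thesis by (simp add: jacobiator_gen_lu)
qed

section \<open>The Jacobiator at v by the symmetry exchanging u and v\<close>

fun swap_letter :: "letter \<Rightarrow> letter" where "swap_letter (L g e) = L (\<not> g) e"

lemma swap_letter_swap_letter[simp]: "swap_letter (swap_letter x) = x" by (cases x) auto
lemma swap_letter_inv: "swap_letter (inv_l x) = inv_l (swap_letter x)" by (cases x) auto
lemma swap_letter_comp[simp]: "swap_letter \<circ> swap_letter = id" by (rule ext) simp

lemma mono_map_swap_letter_cr: "mono (map swap_letter (cr x r)) = mono (map swap_letter (x # r))"
proof (cases r)
  case (Cons y r')
  show ?thesis
  proof (cases "y = inv_l x")
    case True
    then show ?thesis using Cons by (simp add: mono_Cons swap_letter_inv gen_el_mult_inv_left)
  qed (use Cons in auto)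
qed simp

lemma mono_map_swap_letter_reduce: "mono (map swap_letter (reduce w)) = mono (map swap_letter w)"
  by (induction w) (simp_all add: reduce_Cons mono_map_swap_letter_cr mono_Cons)

definition swap_uv :: "A \<Rightarrow> A" where "swap_uv y = lin_word (\<lambda>w. mono (map swap_letter w)) y"

lemma swap_uv_mono: "swap_uv (mono w) = mono (map swap_letter w)"
  by (simp add: swap_uv_def lin_word_mono mono_map_swap_letter_reduce)
lemma swap_uv_add: "swap_uv (a + b) = swap_uv a + swap_uv b" by (simp add: swap_uv_def lin_word_add)
lemma swap_uv_cs: "swap_uv (cs c a) = cs c (swap_uv a)" by (simp add: swap_uv_def lin_word_cs)
lemma swap_uv_zero[simp]: "swap_uv 0 = 0" by (simp add: swap_uv_def)
lemma swap_uv_minus: "swap_uv (- a) = - swap_uv a" using swap_uv_cs[of "-1" a] by (simp add: cs_minus_one)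
lemma swap_uv_diff: "swap_uv (a - b) = swap_uv a - swap_uv b"
  using swap_uv_add[of a "-b"] by (simp add: swap_uv_minus)
lemma swap_uv_sum: "swap_uv (sum f S) = (\<Sum>x\<in>S. swap_uv (f x))"
  by (induction S rule: infinite_finite_induct) (auto simp: swap_uv_add)
lemma swap_uv_gen: "swap_uv (gen_el x) = gen_el (swap_letter x)"
  using swap_uv_mono[of "[x]"] by simp

lemma swap_uv_mult: "swap_uv (a * b) = swap_uv a * swap_uv b"
proof -
  have mono1: "swap_uv (mono w * b) = swap_uv (mono w) * swap_uv b" for w
    by (rule A_linear_eqI[where F = "\<lambda>b. swap_uv (mono w * b)"])
       (simp_all add: distrib_left swap_uv_add swap_uv_cs cs_mult_right mono_append[symmetric] swap_uv_mono)
  show ?thesis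
    by (rule A_linear_eqI[where F = "\<lambda>a. swap_uv (a * b)"])
       (simp_all add: distrib_right swap_uv_add swap_uv_cs cs_mult_left mono1)
qed

lemma lbr_op_swap_letter: "lbr_op (swap_letter x) (swap_letter y) (swap_uv z) = - swap_uv (lbr_op x y z)"
  by (cases x rule: letter_cases; cases y rule: letter_cases)
     (simp_all add: lbr_op_def mono_def swap_uv_mult swap_uv_gen swap_uv_cs swap_uv_minus cs_minus_one)

lemma wbr_swap_letter: "wbr (map swap_letter a) (map swap_letter b) = - swap_uv (wbr a b)"
proof -
  have "wbr (map swap_letter a) (map swap_letter b) = (\<Sum>i<length a. \<Sum>j<length b.
      mono (map swap_letter (take j b))
      * lbr_op (swap_letter (a ! i)) (swap_letter (b ! j))
          (mono (map swap_letter (drop (Suc i) a)) * mono (map swap_letter (take i a)))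
      * mono (map swap_letter (drop (Suc j) b)))"
    unfolding wbr_def wbr_op_def by (simp add: take_map drop_map)
  also have "\<dots> = (\<Sum>i<length a. \<Sum>j<length b.
      - (mono (map swap_letter (take j b)) * swap_uv (lbr_op (a ! i) (b ! j) (mono (drop (Suc i) a) * mono (take i a)))
         * mono (map swap_letter (drop (Suc j) b))))"
    using lbr_op_swap_letter[of _ _ "mono _ * mono _"] by (simp add: swap_uv_mult swap_uv_mono)
  also have "\<dots> = - swap_uv (wbr a b)"
    unfolding wbr_def wbr_op_def by (simp add: swap_uv_sum swap_uv_mult swap_uv_mono sum_negf)
  finally show ?thesis .
qed

lemma brK_swap_uv: "brK (swap_uv a) (swap_uv b) = - swap_uv (brK a b)"
proof -
  have mono2: "brK (swap_uv (mono p)) (swap_uv (mono q)) = - swap_uv (brK (mono p) (mono q))" for p q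
    by (simp add: swap_uv_mono brK_mono wbr_swap_letter)
  have mono1: "brK (swap_uv (mono p)) (swap_uv b) = - swap_uv (brK (mono p) b)" for p
    by (rule A_linear_eqI[where F = "\<lambda>b. brK (swap_uv (mono p)) (swap_uv b)"])
       (simp_all add: swap_uv_add swap_uv_cs brK_add_right brK_cs_right mono2 cs_minus)
  show ?thesis
    by (rule A_linear_eqI[where F = "\<lambda>a. brK (swap_uv a) (swap_uv b)"])
       (simp_all add: swap_uv_add swap_uv_cs brK_add_left brK_cs_left mono1 cs_minus)
qed

lemma brK_minus_left: "brK (- a) b = - brK a b" using brK_cs_left[of "-1" a b] by (simp add: cs_minus_one)
lemma brK_minus_right: "brK a (- b) = - brK a b" using brK_cs_right[of a "-1" b] by (simp add: cs_minus_one)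

lemma jacobiator_swap_uv: "jacobiator (swap_uv a) (swap_uv b) (swap_uv c) = swap_uv (jacobiator a b c)"
  by (simp add: jacobiator_def brK_swap_uv brK_minus_left brK_minus_right swap_uv_diff)

lemma jacobiator_mono_gen_lv: "jacobiator (mono p) (mono q) (gen_el lv) = 0"
proof -
  have "jacobiator (mono p) (mono q) (gen_el lv)
      = jacobiator (swap_uv (mono (map swap_letter p))) (swap_uv (mono (map swap_letter q))) (swap_uv (gen_el lu))"
    by (simp add: swap_uv_mono swap_uv_gen)
  also have "\<dots> = swap_uv (jacobiator (mono (map swap_letter p)) (mono (map swap_letter q)) (gen_el lu))"
    by (rule jacobiator_swap_uv)
  finally show ?thesis by (simp add: jacobiator_mono_gen_lu)
qed

theorem mainTheorem1:
  shows
    "(\<forall>a a' b :: A. brK (a + a') b = brK a b + brK a' b)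
   \<and> (\<forall>a b b' :: A. brK a (b + b') = brK a b + brK a b')
   \<and> (\<forall>(c::complex) (a::A) b. brK (cs c a) b = cs c (brK a b))
   \<and> (\<forall>(c::complex) (a::A) b. brK a (cs c b) = cs c (brK a b))
   \<and> (\<forall>a b c :: A. brK a (b * c) = brK a b * c + b * brK a c)
   \<and> (\<forall>a b c :: A. brK (a * b) c = brK (b * a) c)
   \<and> (\<forall>a b :: A. brK a b + brK b a \<in> commA)
   \<and> (\<forall>H1 H2 x :: A. brK H1 (brK H2 x) - brK H2 (brK H1 x) = brK (brK H1 H2) x)"
proof -
  have "brK H1 (brK H2 x) - brK H2 (brK H1 x) = brK (brK H1 H2) x" for H1 H2 x
    using jacobiator_eq_zeroI[OF jacobiator_mono_gen_lu jacobiator_mono_gen_lv, of H1 H2 x]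
    by (simp add: jacobiator_def)
  then show ?thesis
    using brK_add_left brK_add_right brK_cs_left brK_cs_right brK_mult_right brK_cyclic brK_skew_mod_commA
    by blast
qed

end
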